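(* There exist universal constants $0<c\le C$ such that for all integers $n\ge k\ge 2$ and $r\ge 0$, \[ c\,k(\log_k n + r)\le \mathsf{opt}_{\operatorname{bandit}}^{\operatorname{adap}}(n,k,r)\le C\,k(\log_k n+r). \] Furthermore, for every constant $C_0>0$ there exist constants $0<c'\le C'$ depending only on $C_0$ such that whenever $n\ge k\ge 2$, $r\ge 0$ and $r\le C_0\log_k n$, \[ c'\,k\log_k n\le \mathsf{opt}_{\operatorname{bandit}}^{\operatorname{obl}}(n,k,r)\le C'\,k\log_k n. \]
   Context: Prediction with expert advice, $n$ experts, $k$ labels: let $\mathcal{Y}=\{1,\dots,k\}$, $\mathcal{X}=[k]^n$, and $\mathcal{U}_{n,k}=\{h_1,\dots,h_n\}$ with $h_i(x)=x_i$. For $r\ge0$ let $\mathcal{P}_r$ be the set of finite sequences $p$ of examples in $\mathcal{X}\times\mathcal{Y}$ such that some $h_i$ satisfies $h_i(x)\neq y$ for at most $r$ examples $(x,y)$ of $p$. Online learning with bandit feedback: in rounds $t=1,2,\dots$ the adversary presents $x_t$, the learner draws $\hat y_t$ from a distribution $\pi^{(t)}$ depending on past observations and $x_t$, and observes only whether $\hat y_t=y_t$ (true label); a mistake is $\hat y_t\ne y_t$. Oblivious: the adversary fixes $S\in\mathcal{P}_r$ in advance; $\mathsf{opt}_{\operatorname{bandit}}^{\operatorname{obl}}(n,k,r)=\inf_{\text{learner}}\sup_{S\in\mathcal{P}_r}$ expected mistakes. Adaptive: each round the adversary picks $x_t$ from the history, sees $\pi^{(t)}$, and picks a distribution $\tau^{(t)}$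 of $y_t$ ($\hat y_t\sim\pi^{(t)}$, $y_t\sim\tau^{(t)}$), subject to: whenever the history is realizable, every $y_t$ in the support of $\tau^{(t)}$ keeps it realizable, where a history of (instance, correct/incorrect, prediction) triples is realizable if some choice of true labels agreeing with all observations yields a sequence in $\mathcal{P}_r$ (i.e. some expert is inconsistent with the bandit feedback in at most $r$ rounds). $\mathsf{opt}_{\operatorname{bandit}}^{\operatorname{adap}}(n,k,r)=\inf_{\text{learner}}\sup_{\text{adversary}}$ expected mistakes. *)

theory Defs
  imports "HOL-Probability.Probability"
begin

text \<open>Labels are 1..k; an instance is a list of length n of labels (expert predictions);
  expert i (i < n) predicts x ! i. A history is a list of observations
  (instance, prediction was correct, prediction).\<close>

type_synonym inst = "nat list"
type_synonym hist = "(nat list \<times> bool \<times> nat) list"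

definition instances :: "nat \<Rightarrow> nat \<Rightarrow> inst set" where
  "instances n k = {x. length x = n \<and> set x \<subseteq> {1..k}}"

definition in_P :: "nat \<Rightarrow> nat \<Rightarrow> nat \<Rightarrow> (inst \<times> nat) list \<Rightarrow> bool" where
  "in_P n k r S \<longleftrightarrow>
     (\<forall>(x, y) \<in> set S. x \<in> instances n k \<and> y \<in> {1..k}) \<and>
     (\<exists>i<n. length (filter (\<lambda>(x, y). x ! i \<noteq> y) S) \<le> r)"

definition realizable :: "nat \<Rightarrow> nat \<Rightarrow> nat \<Rightarrow> hist \<Rightarrow> bool" where
  "realizable n k r h \<longleftrightarrow>
     (\<exists>ys. length ys = length h \<and>
        (\<forall>t<length h. (ys ! t = snd (snd (h ! t))) \<longleftrightarrow> fst (snd (h ! t))) \<and>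
        in_P n k r (zip (map fst h) ys))"

text \<open>Expected number of mistakes in T rounds starting from history h, for a learner L
  (history, instance \<mapsto> distribution of prediction) against an adversary given by an
  instance rule ax and a label-distribution rule lab (which sees the learner's distribution).\<close>
primrec game_val ::
  "(hist \<Rightarrow> inst \<Rightarrow> nat pmf) \<Rightarrow> (hist \<Rightarrow> inst) \<Rightarrow> (hist \<Rightarrow> nat pmf \<Rightarrow> nat pmf)
     \<Rightarrow> nat \<Rightarrow> hist \<Rightarrow> real" where
  "game_val L ax lab 0 h = 0"
| "game_val L ax lab (Suc T) h =
     (let x = ax h; \<pi> = L h x in
       measure_pmf.expectation (pair_pmf \<pi> (lab h \<pi>))
         (\<lambda>(yh, y). (if yh = y then 0 else 1) + game_val L ax lab T (h @ [(x, yh = y, yh)])))"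

definition valid_learner :: "nat \<Rightarrow> (hist \<Rightarrow> inst \<Rightarrow> nat pmf) \<Rightarrow> bool" where
  "valid_learner k L \<longleftrightarrow> (\<forall>h x. set_pmf (L h x) \<subseteq> {1..k})"

definition valid_adap_adv ::
  "nat \<Rightarrow> nat \<Rightarrow> nat \<Rightarrow> (hist \<Rightarrow> inst) \<Rightarrow> (hist \<Rightarrow> nat pmf \<Rightarrow> nat pmf) \<Rightarrow> bool" where
  "valid_adap_adv n k r ax lab \<longleftrightarrow>
     (\<forall>h \<pi>. ax h \<in> instances n k \<and> set_pmf (lab h \<pi>) \<subseteq> {1..k} \<and>
        (realizable n k r h \<longrightarrow>
          (\<forall>y \<in> set_pmf (lab h \<pi>). \<forall>yh \<in> {1..k}.
             realizable n k r (h @ [(ax h, yh = y, yh)]))))"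

definition opt_bandit_adap :: "nat \<Rightarrow> nat \<Rightarrow> nat \<Rightarrow> ereal" where
  "opt_bandit_adap n k r =
     (INF L \<in> {L. valid_learner k L}.
        SUP A \<in> {(ax, lab, T). valid_adap_adv n k r ax lab}.
          ereal (case A of (ax, lab, T) \<Rightarrow> game_val L ax lab T []))"

definition obl_val :: "(hist \<Rightarrow> inst \<Rightarrow> nat pmf) \<Rightarrow> (inst \<times> nat) list \<Rightarrow> real" where
  "obl_val L S = game_val L (\<lambda>h. fst (S ! length h)) (\<lambda>h \<pi>. return_pmf (snd (S ! length h)))
                   (length S) []"

definition opt_bandit_obl :: "nat \<Rightarrow> nat \<Rightarrow> nat \<Rightarrow> ereal" where
  "opt_bandit_obl n k r =
     (INF L \<in> {L. valid_learner k L}. SUP S \<in> {S. in_P n k r S}. ereal (obl_val L S))"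

end

theory Submission
  imports Defs
begin

text \<open>Upper bound: exponential weights, which multiplies the weight of every expert refuted by
  the feedback by \<open>k\<^sup>-\<^sup>3\<close> and samples from the weighted vote when that vote is concentrated,
  uniformly otherwise. With \<open>D = 12 k / ln k\<close>, the potential \<open>D (ln W + 3 r ln k)\<close> of the
  total weight \<open>W\<close> drops in expectation by at least the expected mistake of each round, it
  stays nonnegative while some expert has at most \<open>r\<close> mistakes, and it starts at
  \<open>12 k log\<^sub>k n + 36 k r\<close>.

  Lower bounds: split \<open>d = \<lfloor>log\<^sub>k n\<rfloor>\<close> blocks of \<open>k\<close> rounds; in block \<open>q\<close> expert \<open>e\<close>
  predicts the \<open>q\<close>-th base-\<open>k\<close> digit of \<open>e\<close>, and the block's label is uniform. Each block is
  a game of guessing a uniform label with yes/no feedback, which costs \<open>(k - 1)/2\<close> expected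
  mistakes, so averaging over all label sequences gives an oblivious sequence with
  \<open>d (k - 1)/2\<close> mistakes. Oblivious adversaries are special adaptive ones. An adaptive
  adversary can moreover always confirm the least likely label among the experts \<open>i < k\<close> that
  still have at most \<open>r\<close> mistakes, which forces \<open>(k - 1)(r + 1)/6\<close> mistakes.\<close>

section \<open>Realizability through the mistake counts of the experts\<close>

fun refutes :: "inst \<times> bool \<times> nat \<Rightarrow> nat \<Rightarrow> bool" where
  "refutes (x, c, yh) i \<longleftrightarrow> (x ! i = yh) \<noteq> c"

definition mistakes :: "hist \<Rightarrow> nat \<Rightarrow> nat" where
  "mistakes h i = length (filter (\<lambda>obs. refutes obs i) h)"

definition well_formed_hist :: "nat \<Rightarrow> nat \<Rightarrow> hist \<Rightarrow> bool" where
  "well_formed_hist n k h \<longleftrightarrow> (\<forall>(x, c, yh) \<in> set h. x \<in> instances n k \<and> (c \<longrightarrow> yh \<in> {1..k}))"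

lemma mistakes_Nil [simp]: "mistakes [] i = 0"
  by (simp add: mistakes_def)

lemma mistakes_snoc [simp]: "mistakes (h @ [obs]) i = mistakes h i + (if refutes obs i then 1 else 0)"
  by (simp add: mistakes_def)

lemma well_formed_hist_Nil [simp]: "well_formed_hist n k []"
  by (simp add: well_formed_hist_def)

lemma well_formed_hist_snoc [simp]:
  "well_formed_hist n k (h @ [(x, c, yh)]) \<longleftrightarrow>
     well_formed_hist n k h \<and> x \<in> instances n k \<and> (c \<longrightarrow> yh \<in> {1..k})"
  by (auto simp: well_formed_hist_def)

lemma instances_nth: "x \<in> instances n k \<Longrightarrow> i < n \<Longrightarrow> x ! i \<in> {1..k}"
  unfolding instances_def by (auto dest: nth_mem)

lemma length_filter_zip_mono:
  assumes "length xs = length ys" and "\<And>a b. (a, b) \<in> set (zip xs ys) \<Longrightarrow> P a \<Longrightarrow> Q b"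
  shows "length (filter P xs) \<le> length (filter Q ys)"
  using assms by (induction xs ys rule: list_induct2) (auto intro: le_SucI)

lemma realizable_imp_mistakes_le:
  assumes "realizable n k r h"
  shows "well_formed_hist n k h \<and> (\<exists>i<n. mistakes h i \<le> r)"
proof -
  obtain ys where len: "length ys = length h"
    and feedback: "\<forall>t<length h. (ys ! t = snd (snd (h ! t))) \<longleftrightarrow> fst (snd (h ! t))"
    and P: "in_P n k r (zip (map fst h) ys)"
    using assms unfolding realizable_def by blast
  from P obtain i where i: "i < n"
    and ri: "length (filter (\<lambda>(x, y). x ! i \<noteq> y) (zip (map fst h) ys)) \<le> r"
    and labels: "\<forall>(x, y) \<in> set (zip (map fst h) ys). x \<in> instances n k \<and> y \<in> {1..k}"
    unfolding in_P_def by blast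
  have "well_formed_hist n k h"
    unfolding well_formed_hist_def
  proof clarify
    fix x c yh assume "(x, c, yh) \<in> set h"
    then obtain t where t: "t < length h" "h ! t = (x, c, yh)" by (metis in_set_conv_nth)
    then have "(x, ys ! t) \<in> set (zip (map fst h) ys)" using len by (force simp: set_zip)
    moreover have "c \<longrightarrow> ys ! t = yh" using feedback[rule_format, OF t(1)] by (simp add: t(2))
    ultimately show "x \<in> instances n k \<and> (c \<longrightarrow> yh \<in> {1..k})" using labels by auto
  qed
  moreover have "mistakes h i \<le> length (filter (\<lambda>(x, y). x ! i \<noteq> y) (zip (map fst h) ys))"
    unfolding mistakes_def
  proof (rule length_filter_zip_mono)
    show "length h = length (zip (map fst h) ys)" using len by simp
    fix obs p assume "(obs, p) \<in> set (zip h (zip (map fst h) ys))" and "refutes obs i"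
    then obtain t where t: "t < length h" "obs = h ! t" "p = (fst (h ! t), ys ! t)"
      using len by (auto simp: set_zip)
    obtain x c yh where ht: "h ! t = (x, c, yh)" by (cases "h ! t")
    have "(ys ! t = yh) \<longleftrightarrow> c" using feedback[rule_format, OF t(1)] by (simp add: ht)
    moreover have "(x ! i = yh) \<noteq> c" using \<open>refutes obs i\<close> t(2) ht by simp
    ultimately show "(\<lambda>(x, y). x ! i \<noteq> y) p" using t(3) ht by auto
  qed
  ultimately show ?thesis using i ri by auto
qed

fun explaining_label :: "nat \<Rightarrow> inst \<times> bool \<times> nat \<Rightarrow> nat" where
  "explaining_label i (x, c, yh) =
     (if c then yh else if x ! i \<noteq> yh then x ! i else if yh = 1 then 2 else 1)"

lemma explaining_label_feedback: "explaining_label i obs = snd (snd obs) \<longleftrightarrow> fst (snd obs)"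
  by (cases obs) simp

lemma refutes_iff_explaining_label: "refutes obs i \<longleftrightarrow> fst obs ! i \<noteq> explaining_label i obs"
  by (cases obs) auto

lemma realizable_if_mistakes_le:
  assumes k: "2 \<le> k" and wf: "well_formed_hist n k h" and i: "i < n" "mistakes h i \<le> r"
  shows "realizable n k r h"
proof -
  define ys where "ys = map (explaining_label i) h"
  have S: "zip (map fst h) ys = map (\<lambda>obs. (fst obs, explaining_label i obs)) h"
    unfolding ys_def by (induction h) auto
  have "fst obs \<in> instances n k \<and> explaining_label i obs \<in> {1..k}" if "obs \<in> set h" for obs
  proof -
    obtain x c yh where obs: "obs = (x, c, yh)" by (cases obs)
    have "x \<in> instances n k" "c \<longrightarrow> yh \<in> {1..k}"
      using wf that unfolding well_formed_hist_def obs by auto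
    then show ?thesis using instances_nth[of x n k i] i k obs by auto
  qed
  moreover have "length (filter (\<lambda>(x, y). x ! i \<noteq> y) (zip (map fst h) ys)) = mistakes h i"
    unfolding S mistakes_def by (simp add: o_def refutes_iff_explaining_label)
  ultimately have "in_P n k r (zip (map fst h) ys)"
    using i unfolding in_P_def S by auto
  moreover have "\<forall>t<length h. (ys ! t = snd (snd (h ! t))) \<longleftrightarrow> fst (snd (h ! t))"
    unfolding ys_def by (simp add: explaining_label_feedback)
  ultimately show ?thesis unfolding realizable_def by (metis length_map ys_def)
qed

definition keeps_realizable :: "nat \<Rightarrow> nat \<Rightarrow> nat \<Rightarrow> hist \<Rightarrow> inst \<Rightarrow> nat \<Rightarrow> bool" where
  "keeps_realizable n k r h x y \<longleftrightarrow> (\<forall>yh\<in>{1..k}. realizable n k r (h @ [(x, yh = y, yh)]))"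

lemma valid_adap_adv_iff_keeps_realizable:
  "valid_adap_adv n k r ax lab \<longleftrightarrow>
     (\<forall>h \<pi>. ax h \<in> instances n k \<and> set_pmf (lab h \<pi>) \<subseteq> {1..k} \<and>
        (realizable n k r h \<longrightarrow> (\<forall>y \<in> set_pmf (lab h \<pi>). keeps_realizable n k r h (ax h) y)))"
  unfolding valid_adap_adv_def keeps_realizable_def ..

lemma keeps_realizable_expert_label:
  assumes k: "2 \<le> k" and h: "realizable n k r h" and x: "x \<in> instances n k"
    and i: "i < n" "mistakes h i \<le> r"
  shows "keeps_realizable n k r h x (x ! i)"
  unfolding keeps_realizable_def
proof
  fix yh assume "yh \<in> {1..k}"
  then have "well_formed_hist n k (h @ [(x, yh = x ! i, yh)])"
    using realizable_imp_mistakes_le[OF h] x by simp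
  moreover have "\<not> refutes (x, yh = x ! i, yh) i" by auto
  then have "mistakes (h @ [(x, yh = x ! i, yh)]) i \<le> r" using i by simp
  ultimately show "realizable n k r (h @ [(x, yh = x ! i, yh)])"
    using realizable_if_mistakes_le[OF k _ i(1)] by blast
qed

lemma realizable_imp_keeps_realizable_label:
  assumes "2 \<le> k" "realizable n k r h" "x \<in> instances n k"
  shows "\<exists>y\<in>{1..k}. keeps_realizable n k r h x y"
  using realizable_imp_mistakes_le[OF assms(2)] keeps_realizable_expert_label[OF assms]
    instances_nth[OF assms(3)] by blast

section \<open>Game values\<close>

lemma game_val_Suc_sum:
  assumes "set_pmf (L h (ax h)) \<subseteq> {1..k}" "set_pmf (lab h (L h (ax h))) \<subseteq> {1..k}"
  shows "game_val L ax lab (Suc T) h =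
    (\<Sum>yh\<in>{1..k}. \<Sum>y\<in>{1..k}. pmf (L h (ax h)) yh * pmf (lab h (L h (ax h))) y *
        ((if yh = y then 0 else 1) + game_val L ax lab T (h @ [(ax h, yh = y, yh)])))"
proof -
  let ?\<pi> = "L h (ax h)" let ?\<tau> = "lab h ?\<pi>"
  let ?f = "\<lambda>(yh, y). (if yh = y then 0 else 1) + game_val L ax lab T (h @ [(ax h, yh = y, yh)])"
  have "game_val L ax lab (Suc T) h = measure_pmf.expectation (pair_pmf ?\<pi> ?\<tau>) ?f"
    by (simp add: Let_def)
  also have "\<dots> = (\<Sum>a\<in>{1..k}\<times>{1..k}. ?f a * pmf (pair_pmf ?\<pi> ?\<tau>) a)"
    by (rule integral_measure_pmf_real) (use assms in auto)
  also have "\<dots> = (\<Sum>yh\<in>{1..k}. \<Sum>y\<in>{1..k}. ?f (yh, y) * pmf (pair_pmf ?\<pi> ?\<tau>) (yh, y))"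
    by (subst sum.cartesian_product) (simp add: case_prod_beta)
  also have "\<dots> = (\<Sum>yh\<in>{1..k}. \<Sum>y\<in>{1..k}. pmf ?\<pi> yh * pmf ?\<tau> y *
        ((if yh = y then 0 else 1) + game_val L ax lab T (h @ [(ax h, yh = y, yh)])))"
    by (simp add: pmf_pair mult.commute mult.left_commute)
  finally show ?thesis .
qed

lemma sum_pmf_return:
  fixes g :: "'a \<Rightarrow> real"
  assumes "finite A" "y \<in> A"
  shows "(\<Sum>y'\<in>A. a * pmf (return_pmf y) y' * g y') = a * g y"
proof -
  have "(\<Sum>y'\<in>A. a * pmf (return_pmf y) y' * g y') = (\<Sum>y'\<in>A. if y' = y then a * g y' else 0)"
    by (rule sum.cong) (auto simp: indicator_def)
  then show ?thesis using assms by simp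
qed

lemma game_val_Suc_return:
  assumes "set_pmf (L h (ax h)) \<subseteq> {1..k}" "lab h (L h (ax h)) = return_pmf y" "y \<in> {1..k}"
  shows "game_val L ax lab (Suc T) h =
    (\<Sum>yh\<in>{1..k}. pmf (L h (ax h)) yh *
        ((if yh = y then 0 else 1) + game_val L ax lab T (h @ [(ax h, yh = y, yh)])))"
proof -
  have "game_val L ax lab (Suc T) h = (\<Sum>yh\<in>{1..k}. \<Sum>y'\<in>{1..k}.
      pmf (L h (ax h)) yh * pmf (lab h (L h (ax h))) y' *
        ((if yh = y' then 0 else 1) + game_val L ax lab T (h @ [(ax h, yh = y', yh)])))"
    by (rule game_val_Suc_sum) (use assms in auto)
  also have "\<dots> = (\<Sum>yh\<in>{1..k}. pmf (L h (ax h)) yh *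
        ((if yh = y then 0 else 1) + game_val L ax lab T (h @ [(ax h, yh = y, yh)])))"
    unfolding assms(2) by (rule sum.cong[OF refl], rule sum_pmf_return) (use assms(3) in auto)
  finally show ?thesis .
qed

lemma game_val_nonneg: "0 \<le> game_val L ax lab T h"
proof (induction T arbitrary: h)
  case (Suc T)
  show ?case
    by (simp add: Let_def, rule integral_nonneg_AE) (auto intro!: add_nonneg_nonneg Suc.IH)
qed simp

lemma game_val_cong_invariant:
  assumes agree: "\<And>h. R h \<Longrightarrow> length h < N \<Longrightarrow>
      ax' h = ax h \<and> lab' h (L h (ax h)) = lab h (L h (ax h))"
    and closed: "\<And>h y yh. R h \<Longrightarrow> length h < N \<Longrightarrow> y \<in> set_pmf (lab h (L h (ax h))) \<Longrightarrow>
      R (h @ [(ax h, yh = y, yh)])"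
  shows "R h \<Longrightarrow> length h + T \<le> N \<Longrightarrow> game_val L ax' lab' T h = game_val L ax lab T h"
proof (induction T arbitrary: h)
  case (Suc T)
  have "ax' h = ax h" "lab' h (L h (ax h)) = lab h (L h (ax h))" using agree Suc.prems by auto
  moreover have "game_val L ax' lab' T (h @ [(ax h, yh = y, yh)]) = game_val L ax lab T (h @ [(ax h, yh = y, yh)])"
    if "y \<in> set_pmf (lab h (L h (ax h)))" for y yh
    using Suc.IH closed Suc.prems that by simp
  ultimately show ?case by (auto simp: Let_def AE_measure_pmf_iff intro!: integral_cong_AE)
qed simp

section \<open>Oblivious adversaries as adaptive ones\<close>

definition transcript_of :: "(inst \<times> nat) list \<Rightarrow> hist \<Rightarrow> bool" where
  "transcript_of S h \<longleftrightarrow> length h \<le> length S \<and>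
     (\<forall>t<length h. fst (h ! t) = fst (S ! t) \<and> (fst (snd (h ! t)) \<longleftrightarrow> snd (snd (h ! t)) = snd (S ! t)))"

lemma transcript_of_snoc:
  assumes "transcript_of S h" "length h < length S"
  shows "transcript_of S (h @ [(fst (S ! length h), yh = snd (S ! length h), yh)])"
  using assms unfolding transcript_of_def by (auto simp: nth_append less_Suc_eq)

lemma length_filter_take_le: "length (filter P (take m xs)) \<le> length (filter P xs)"
  by (metis append_take_drop_id filter_append length_append le_add1)

lemma in_P_take: "in_P n k r S \<Longrightarrow> in_P n k r (take m S)"
  unfolding in_P_def by (auto dest: in_set_takeD intro: order_trans[OF length_filter_take_le])

lemma realizable_transcript:
  assumes S: "in_P n k r S" and h: "transcript_of S h"
  shows "realizable n k r h"
proof -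
  have len: "length h \<le> length S" using h by (simp add: transcript_of_def)
  have "zip (map fst h) (map snd (take (length h) S)) = take (length h) S"
    using h len by (auto simp: transcript_of_def intro!: nth_equalityI)
  then show ?thesis
    unfolding realizable_def using h in_P_take[OF S, of "length h"] len
    by (intro exI[of _ "map snd (take (length h) S)"]) (auto simp: transcript_of_def)
qed

text \<open>A sequence \<open>S \<in> P\<^sub>r\<close> keeps its own transcripts realizable, but an adaptive adversary
  must do so on every realizable history; elsewhere its label is therefore repaired.\<close>

definition safe_label :: "nat \<Rightarrow> nat \<Rightarrow> nat \<Rightarrow> hist \<Rightarrow> inst \<Rightarrow> nat \<Rightarrow> nat" where
  "safe_label n k r h x y = (if y \<in> {1..k} \<and> keeps_realizable n k r h x y then y
     else SOME y'. y' \<in> {1..k} \<and> (realizable n k r h \<longrightarrow> keeps_realizable n k r h x y'))"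

lemma safe_label:
  assumes "2 \<le> k" "x \<in> instances n k"
  shows "safe_label n k r h x y \<in> {1..k}"
    and "realizable n k r h \<Longrightarrow> keeps_realizable n k r h x (safe_label n k r h x y)"
proof -
  have "\<exists>y'. y' \<in> {1..k} \<and> (realizable n k r h \<longrightarrow> keeps_realizable n k r h x y')"
  proof (cases "realizable n k r h")
    case True
    then show ?thesis using realizable_imp_keeps_realizable_label[OF assms(1) True assms(2)] by auto
  next
    case False
    then show ?thesis using assms(1) by (intro exI[of _ 1]) auto
  qed
  from someI_ex[OF this]
  show "safe_label n k r h x y \<in> {1..k}"
    and "realizable n k r h \<Longrightarrow> keeps_realizable n k r h x (safe_label n k r h x y)"
    unfolding safe_label_def by auto
qed

lemma valid_adap_adv_safe_label:
  assumes "2 \<le> k" "\<And>h. ax h \<in> instances n k"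
  shows "valid_adap_adv n k r ax (\<lambda>h \<pi>. return_pmf (safe_label n k r h (ax h) (f h)))"
  using safe_label[OF assms(1) assms(2)] assms(2)
  unfolding valid_adap_adv_iff_keeps_realizable by simp

lemma obl_val_as_adaptive:
  assumes k: "2 \<le> k" and S: "in_P n k r S"
  shows "\<exists>ax lab. valid_adap_adv n k r ax lab \<and> game_val L ax lab (length S) [] = obl_val L S"
proof -
  define ax :: "hist \<Rightarrow> inst"
    where "ax h = (if length h < length S then fst (S ! length h) else replicate n 1)" for h
  define lab where "lab h \<pi> = return_pmf (safe_label n k r h (ax h) (snd (S ! length h)))"
    for h and \<pi> :: "nat pmf"
  have S_nth: "fst (S ! t) \<in> instances n k \<and> snd (S ! t) \<in> {1..k}" if "t < length S" for t
    using S nth_mem[OF that] unfolding in_P_def by auto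
  have ax: "ax h \<in> instances n k" for h
    using S_nth k by (auto simp: ax_def instances_def)
  have "game_val L ax lab (length S) [] =
      game_val L (\<lambda>h. fst (S ! length h)) (\<lambda>h \<pi>. return_pmf (snd (S ! length h))) (length S) []"
  proof (rule game_val_cong_invariant[where R = "transcript_of S"])
    fix h assume h: "transcript_of S h" "length h < length S"
    then have "keeps_realizable n k r h (fst (S ! length h)) (snd (S ! length h))"
      unfolding keeps_realizable_def using realizable_transcript[OF S] transcript_of_snoc by blast
    then show "ax h = fst (S ! length h) \<and>
        lab h (L h (fst (S ! length h))) = return_pmf (snd (S ! length h))"
      using h(2) S_nth[OF h(2)] by (simp add: ax_def lab_def safe_label_def)
  next
    fix h y yh assume "transcript_of S h" "length h < length S"
      and "y \<in> set_pmf (return_pmf (snd (S ! length h)))"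
    then show "transcript_of S (h @ [(fst (S ! length h), yh = y, yh)])"
      using transcript_of_snoc by simp
  qed (simp_all add: transcript_of_def)
  moreover have "valid_adap_adv n k r ax lab"
    unfolding lab_def by (rule valid_adap_adv_safe_label[OF k ax])
  ultimately show ?thesis unfolding obl_val_def by blast
qed

lemma opt_bandit_obl_le_adap:
  assumes "2 \<le> k"
  shows "opt_bandit_obl n k r \<le> opt_bandit_adap n k r"
  unfolding opt_bandit_obl_def opt_bandit_adap_def
proof (intro INF_mono' SUP_mono)
  fix L S assume "S \<in> {S. in_P n k r S}"
  with obl_val_as_adaptive[OF assms, of n r S L] obtain ax lab
    where "valid_adap_adv n k r ax lab" "game_val L ax lab (length S) [] = obl_val L S" by auto
  then show "\<exists>A\<in>{(ax, lab, T). valid_adap_adv n k r ax lab}.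
      ereal (obl_val L S) \<le> ereal (case A of (ax, lab, T) \<Rightarrow> game_val L ax lab T [])"
    by (intro bexI[of _ "(ax, lab, length S)"]) auto
qed

section \<open>Upper bound: exponential weights\<close>

lemma ln_le_half_self: "0 < (y::real) \<Longrightarrow> ln y \<le> y / 2"
proof -
  assume y: "0 < y"
  have "ln y = 2 * ln (sqrt y)" using y by (simp add: ln_sqrt)
  also have "\<dots> \<le> 2 * (sqrt y - 1)" using ln_le_minus_one[of "sqrt y"] y by simp
  also have "\<dots> \<le> y / 2"
  proof -
    have "0 \<le> (sqrt y - 2)^2" by simp
    then show ?thesis using y by (simp add: power2_eq_square algebra_simps)
  qed
  finally show ?thesis .
qed

lemma le_one_of_sum_eq_one:
  fixes a :: "'a \<Rightarrow> real"
  assumes "finite A" "\<And>j. j \<in> A \<Longrightarrow> 0 \<le> a j" "(\<Sum>j\<in>A. a j) = 1" "j \<in> A"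
  shows "a j \<le> 1"
  using member_le_sum[of j A a] assms by simp

definition weight_factor :: "real \<Rightarrow> (nat \<Rightarrow> real) \<Rightarrow> nat \<Rightarrow> nat \<Rightarrow> real" where
  "weight_factor \<epsilon> a y yh = (if yh = y then a y + \<epsilon> * (1 - a y) else 1 - (1 - \<epsilon>) * a yh)"

lemma weight_factor_pos:
  assumes "0 < \<epsilon>" "\<epsilon> < 1" "0 \<le> a yh" "a yh \<le> 1" "0 \<le> a y" "a y \<le> 1"
  shows "0 < weight_factor \<epsilon> a y yh"
proof -
  have "0 \<le> (1 - \<epsilon>) * a y" "(1 - \<epsilon>) * a yh \<le> 1 - \<epsilon>"
    using assms by (simp_all add: mult_left_le)
  then show ?thesis using assms(1) by (auto simp: weight_factor_def algebra_simps)
qed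

lemma weighted_play_quadratic_bound:
  fixes a p Q :: real
  assumes "0 \<le> a" "a \<le> 1" "1 \<le> p" "1 \<le> p * Q" "a\<^sup>2 \<le> Q"
  shows "(1 - a) - p * (Q - a\<^sup>2) - a * p * (1 - a) \<le> 0"
proof (cases "1 \<le> p * a")
  case True
  have "0 \<le> p * (Q - a\<^sup>2)" using assms by simp
  moreover have "(1 - a) * (1 - p * a) \<le> 0" using True assms by (simp add: mult_nonneg_nonpos)
  ultimately show ?thesis by (simp add: algebra_simps)
next
  case False
  then have "a * (2 * p * a - 1 - p) \<le> 0" using assms by (simp add: mult_nonneg_nonpos)
  moreover have "(1 - a) - p * (Q - a\<^sup>2) - a * p * (1 - a) = (1 - p * Q) + a * (2 * p * a - 1 - p)"
    by (simp add: algebra_simps power2_eq_square)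
  ultimately show ?thesis using assms by linarith
qed

text \<open>When the learner samples from the normalised weights \<open>a\<close> and the vote is concentrated
  (large \<open>\<Sum> a\<^sup>2\<close>), the expected mistake is paid for by the expected drop of \<open>D\<close> times
  the log-weight.\<close>

lemma weighted_play_potential_step:
  fixes a :: "nat \<Rightarrow> real"
  assumes nn: "\<And>j. 0 \<le> a j" and s1: "(\<Sum>j\<in>{1..k}. a j) = 1" and y: "y \<in> {1..k}"
    and e: "0 < \<epsilon>" "\<epsilon> < 1" and P: "1 \<le> D * (1 - \<epsilon>)"
    and Q: "1 / (D * (1 - \<epsilon>)) \<le> (\<Sum>j\<in>{1..k}. (a j)\<^sup>2)"
  shows "(\<Sum>yh\<in>{1..k}. a yh * ((if yh = y then 0 else 1) + D * ln (weight_factor \<epsilon> a y yh))) \<le> 0"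
proof -
  define p where "p = D * (1 - \<epsilon>)"
  define Qv where "Qv = (\<Sum>j\<in>{1..k}. (a j)\<^sup>2)"
  have D: "0 < D" using P e by (smt (verit) mult_nonpos_nonneg)
  have le1: "\<And>j. j \<in> {1..k} \<Longrightarrow> a j \<le> 1" using le_one_of_sum_eq_one[OF _ nn s1] by simp
  let ?f = "\<lambda>yh. a yh * ((if yh = y then 0 else 1) + D * ln (weight_factor \<epsilon> a y yh))"
  have ay: "0 \<le> a y" "a y \<le> 1" using nn le1 y by auto
  have t1: "?f y \<le> - (a y * p * (1 - a y))"
  proof -
    have "ln (weight_factor \<epsilon> a y y) \<le> - (1 - \<epsilon>) * (1 - a y)"
      using ln_le_minus_one[OF weight_factor_pos[where a = a, OF e ay ay]]
      by (simp add: weight_factor_def algebra_simps)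
    then have "a y * (D * ln (weight_factor \<epsilon> a y y)) \<le> a y * (D * (- (1 - \<epsilon>) * (1 - a y)))"
      using D ay by (intro mult_left_mono) auto
    then show ?thesis by (simp add: p_def algebra_simps)
  qed
  have t2: "?f j \<le> a j - p * (a j)\<^sup>2" if j: "j \<in> {1..k} - {y}" for j
  proof -
    have aj: "0 \<le> a j" "a j \<le> 1" using nn le1 j by auto
    have "ln (weight_factor \<epsilon> a y j) \<le> - (1 - \<epsilon>) * a j"
      using ln_le_minus_one[OF weight_factor_pos[where a = a, OF e aj ay]] j
      by (simp add: weight_factor_def algebra_simps)
    then have "D * ln (weight_factor \<epsilon> a y j) \<le> D * (- (1 - \<epsilon>) * a j)"
      using D by (intro mult_left_mono) auto
    then have "D * ln (weight_factor \<epsilon> a y j) \<le> - p * a j" by (simp add: p_def algebra_simps)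
    then have "a j * (1 + D * ln (weight_factor \<epsilon> a y j)) \<le> a j * (1 - p * a j)"
      using aj by (intro mult_left_mono) auto
    then show ?thesis using j by (simp add: algebra_simps power2_eq_square)
  qed
  have "(\<Sum>yh\<in>{1..k} - {y}. ?f yh) \<le> (\<Sum>j\<in>{1..k} - {y}. a j - p * (a j)\<^sup>2)"
    by (rule sum_mono) (rule t2)
  also have "\<dots> = (1 - a y) - p * (Qv - (a y)\<^sup>2)"
    using s1 sum.remove[of "{1..k}" y a] sum.remove[of "{1..k}" y "\<lambda>j. (a j)\<^sup>2"] y
    by (simp add: sum_subtractf sum_distrib_left Qv_def)
  finally have rest: "(\<Sum>yh\<in>{1..k} - {y}. ?f yh) \<le> (1 - a y) - p * (Qv - (a y)\<^sup>2)" .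
  have "1 \<le> p * Qv" using Q P by (simp add: p_def Qv_def field_simps)
  moreover have "(a y)\<^sup>2 \<le> Qv" unfolding Qv_def by (rule member_le_sum[OF y]) auto
  ultimately have "(1 - a y) - p * (Qv - (a y)\<^sup>2) - a y * p * (1 - a y) \<le> 0"
    using weighted_play_quadratic_bound ay P by (simp add: p_def)
  then show ?thesis using sum.remove[of "{1..k}" y ?f] y t1 rest by simp
qed

text \<open>Otherwise the learner plays uniformly. Then the true label has small weight, so a correct
  guess shrinks the total weight by a factor of at most \<open>sqrt (6 / D)\<close>.\<close>

lemma uniform_play_correct_factor:
  fixes a :: "nat \<Rightarrow> real"
  assumes nn: "\<And>j. 0 \<le> a j" and s1: "(\<Sum>j\<in>{1..k}. a j) = 1" and y: "y \<in> {1..k}"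
    and e: "0 < \<epsilon>" "\<epsilon> \<le> 1/2" and D: "0 < D"
    and Q: "(\<Sum>j\<in>{1..k}. (a j)\<^sup>2) < 1 / (D * (1 - \<epsilon>))" and ee: "\<epsilon>\<^sup>2 \<le> 1 / D"
  shows "2 * ln (weight_factor \<epsilon> a y y) \<le> ln (6 / D)"
proof -
  define z where "z = weight_factor \<epsilon> a y y"
  have ay: "0 \<le> a y" "a y \<le> 1" using nn le_one_of_sum_eq_one[OF _ nn s1 y] by auto
  have z0: "0 < z" unfolding z_def using e by (intro weight_factor_pos[where a = a, OF e(1) _ ay ay]) auto
  have "z\<^sup>2 \<le> (a y + \<epsilon>)\<^sup>2"
    using z0 ay e by (intro power_mono) (auto simp: z_def weight_factor_def mult_left_le)
  also have "\<dots> \<le> 2 * (a y)\<^sup>2 + 2 * \<epsilon>\<^sup>2"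
    using zero_le_power2[of "a y - \<epsilon>"] by (simp add: power2_eq_square algebra_simps)
  also have "\<dots> \<le> 6 / D"
  proof -
    have "(a y)\<^sup>2 \<le> (\<Sum>j\<in>{1..k}. (a j)\<^sup>2)" by (rule member_le_sum[OF y]) auto
    moreover have "1 / (D * (1 - \<epsilon>)) \<le> 2 / D" using D e by (simp add: field_simps)
    ultimately show ?thesis using Q ee by (simp add: field_simps)
  qed
  finally have "ln (z\<^sup>2) \<le> ln (6 / D)" using z0 D by simp
  then show ?thesis using z0 by (simp add: ln_realpow z_def)
qed

lemma uniform_play_potential_step:
  fixes a :: "nat \<Rightarrow> real"
  assumes nn: "\<And>j. 0 \<le> a j" and s1: "(\<Sum>j\<in>{1..k}. a j) = 1" and y: "y \<in> {1..k}"
    and e: "0 < \<epsilon>" "\<epsilon> \<le> 1/2" and D: "0 < D"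
    and Q: "(\<Sum>j\<in>{1..k}. (a j)\<^sup>2) < 1 / (D * (1 - \<epsilon>))"
    and ee: "\<epsilon>\<^sup>2 \<le> 1 / D" and hl: "D * ln (6 / D) / 2 \<le> - real k"
  shows "(\<Sum>yh\<in>{1..k}. (1 / real k) * ((if yh = y then 0 else 1) + D * ln (weight_factor \<epsilon> a y yh))) \<le> 0"
proof -
  let ?g = "\<lambda>yh. (if yh = y then 0 else 1) + D * ln (weight_factor \<epsilon> a y yh)"
  have "D * (2 * ln (weight_factor \<epsilon> a y y)) \<le> D * ln (6 / D)"
    using uniform_play_correct_factor[OF nn s1 y e D Q ee] D by (intro mult_left_mono) auto
  then have gy: "?g y \<le> - real k" using hl by simp
  have gj: "?g j \<le> 1" if j: "j \<in> {1..k} - {y}" for j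
  proof -
    have aj: "0 \<le> a j" "a j \<le> 1" and ay: "0 \<le> a y" "a y \<le> 1"
      using nn le_one_of_sum_eq_one[OF _ nn s1] j y by auto
    have "weight_factor \<epsilon> a y j \<le> 1" using j aj e by (simp add: weight_factor_def)
    moreover have "0 < weight_factor \<epsilon> a y j"
      using e by (intro weight_factor_pos[where a = a, OF e(1) _ aj ay]) auto
    ultimately have "ln (weight_factor \<epsilon> a y j) \<le> 0" by simp
    then show ?thesis using j D by (simp add: mult_nonneg_nonpos)
  qed
  have "(\<Sum>yh\<in>{1..k}. ?g yh) = ?g y + (\<Sum>yh\<in>{1..k} - {y}. ?g yh)"
    by (rule sum.remove[OF _ y]) simp
  also have "(\<Sum>yh\<in>{1..k} - {y}. ?g yh) \<le> (\<Sum>yh\<in>{1..k} - {y}. 1)"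
    by (rule sum_mono) (rule gj)
  also have "(\<Sum>yh\<in>{1..k} - {y}. (1::real)) = real k - 1" using y by (simp add: of_nat_diff)
  finally have "(\<Sum>yh\<in>{1..k}. ?g yh) \<le> 0" using gy by linarith
  then have "(1 / real k) * (\<Sum>yh\<in>{1..k}. ?g yh) \<le> 0" by (simp add: divide_nonpos_nonneg)
  then show ?thesis by (simp add: sum_distrib_left)
qed

definition decay :: "nat \<Rightarrow> real" where
  "decay k = 1 / real k ^ 3"

definition potential_scale :: "nat \<Rightarrow> real" where
  "potential_scale k = 12 * real k / ln (real k)"

lemma decay_scale_bounds:
  assumes k: "2 \<le> k"
  shows "0 < decay k" "decay k \<le> 1/8" "0 < potential_scale k" "1 \<le> potential_scale k * (1 - decay k)"
    "(decay k)\<^sup>2 \<le> 1 / potential_scale k" "potential_scale k * ln (6 / potential_scale k) / 2 \<le> - real k"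
proof -
  have kr: "2 \<le> real k" using k by simp
  have "ln 2 \<le> ln (real k)" using kr by simp
  then have lk: "1/2 \<le> ln (real k)" using ln2_ge_two_thirds by linarith
  have lk0: "0 < ln (real k)" using lk by simp
  have lkk: "ln (real k) \<le> real k" using ln_le_minus_one[of "real k"] kr by simp
  have k3: "8 \<le> real k ^ 3" using power_mono[OF kr, of 3] by simp
  show e0: "0 < decay k" using kr by (simp add: decay_def)
  show e8: "decay k \<le> 1/8" using k3 by (simp add: decay_def divide_simps)
  show D0: "0 < potential_scale k" using kr lk0 by (simp add: potential_scale_def)
  have D12: "12 \<le> potential_scale k" using lkk lk0 kr by (simp add: potential_scale_def field_simps)
  have "12 * (7/8) \<le> potential_scale k * (1 - decay k)" using D12 e8 by (intro mult_mono) auto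
  then show "1 \<le> potential_scale k * (1 - decay k)" by simp
  have "24 * real k \<le> real k ^ 6"
    using power_mono[OF kr, of 5] kr mult_right_mono[of 32 "real k ^ 5" "real k"]
    by (simp add: power_Suc2 numeral_eq_Suc del: power_Suc)
  then have "(decay k)\<^sup>2 \<le> 1 / (24 * real k)"
    using kr by (simp add: decay_def power_divide divide_simps flip: power_mult)
  also have "\<dots> \<le> 1 / potential_scale k" using lk kr lk0 by (simp add: potential_scale_def field_simps)
  finally show "(decay k)\<^sup>2 \<le> 1 / potential_scale k" .
  have "ln (6 / potential_scale k) = ln (ln (real k)) - ln 2 - ln (real k)"
    using lk0 kr by (simp add: potential_scale_def field_simps ln_div ln_mult)
  also have "\<dots> \<le> - ln (real k) / 2"
    using ln_le_half_self[OF lk0] ln_ge_zero[of 2] by linarith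
  finally have "potential_scale k * ln (6 / potential_scale k) \<le> potential_scale k * (- ln (real k) / 2)"
    using D0 by (intro mult_left_mono) auto
  also have "\<dots> = - 6 * real k" using lk0 by (simp add: potential_scale_def field_simps)
  finally show "potential_scale k * ln (6 / potential_scale k) / 2 \<le> - real k" using kr by simp
qed

definition weight :: "nat \<Rightarrow> hist \<Rightarrow> nat \<Rightarrow> real" where
  "weight k h i = decay k ^ mistakes h i"

definition total_weight :: "nat \<Rightarrow> nat \<Rightarrow> hist \<Rightarrow> real" where
  "total_weight n k h = (\<Sum>i<n. weight k h i)"

definition vote :: "nat \<Rightarrow> nat \<Rightarrow> hist \<Rightarrow> inst \<Rightarrow> nat \<Rightarrow> real" where
  "vote n k h x j = (\<Sum>i\<in>{i\<in>{..<n}. x ! i = j}. weight k h i) / total_weight n k h"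

definition concentrated :: "nat \<Rightarrow> nat \<Rightarrow> hist \<Rightarrow> inst \<Rightarrow> bool" where
  "concentrated n k h x \<longleftrightarrow> x \<in> instances n k \<and> 0 < n \<and>
     1 / (potential_scale k * (1 - decay k)) \<le> (\<Sum>j\<in>{1..k}. (vote n k h x j)\<^sup>2)"

definition weighted_list :: "nat \<Rightarrow> nat \<Rightarrow> hist \<Rightarrow> inst \<Rightarrow> (nat \<times> real) list" where
  "weighted_list n k h x = map (\<lambda>i. (x ! i, weight k h i / total_weight n k h)) [0..<n]"

definition exp_weights :: "nat \<Rightarrow> nat \<Rightarrow> hist \<Rightarrow> inst \<Rightarrow> nat pmf" where
  "exp_weights n k h x =
     (if concentrated n k h x then pmf_of_list (weighted_list n k h x) else pmf_of_set {1..k})"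

definition potential :: "nat \<Rightarrow> nat \<Rightarrow> nat \<Rightarrow> hist \<Rightarrow> real" where
  "potential n k r h = potential_scale k * (ln (total_weight n k h) + 3 * real r * ln (real k))"

lemma weight_pos: "2 \<le> k \<Longrightarrow> 0 < weight k h i"
  using decay_scale_bounds(1) by (simp add: weight_def)

lemma total_weight_pos: "2 \<le> k \<Longrightarrow> 0 < n \<Longrightarrow> 0 < total_weight n k h"
  unfolding total_weight_def by (rule sum_pos) (auto simp: weight_pos)

lemma vote_nonneg: "2 \<le> k \<Longrightarrow> 0 < n \<Longrightarrow> 0 \<le> vote n k h x j"
  unfolding vote_def
  by (intro divide_nonneg_pos sum_nonneg total_weight_pos) (auto simp: weight_pos less_imp_le)

lemma sum_vote:
  assumes "2 \<le> k" "0 < n" "x \<in> instances n k"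
  shows "(\<Sum>j\<in>{1..k}. vote n k h x j) = 1"
proof -
  have "(\<Sum>j\<in>{1..k}. \<Sum>i\<in>{i\<in>{..<n}. x ! i = j}. weight k h i) = total_weight n k h"
    unfolding total_weight_def by (rule sum.group) (auto dest: instances_nth[OF assms(3)])
  then show ?thesis
    using total_weight_pos[OF assms(1,2), of h] by (simp add: vote_def flip: sum_divide_distrib)
qed

lemma pmf_of_list_wf_weighted_list:
  assumes "2 \<le> k" "0 < n"
  shows "pmf_of_list_wf (weighted_list n k h x)"
proof (rule pmf_of_list_wfI)
  show "0 \<le> z" if "z \<in> set (map snd (weighted_list n k h x))" for z
    using that weight_pos[OF assms(1)] total_weight_pos[OF assms]
    by (auto simp: weighted_list_def less_imp_le)
  have "sum_list (map snd (weighted_list n k h x)) = (\<Sum>i<n. weight k h i) / total_weight n k h"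
    by (simp add: weighted_list_def o_def sum_list_distinct_conv_sum_set sum_divide_distrib
        atLeast0LessThan)
  then show "sum_list (map snd (weighted_list n k h x)) = 1"
    using total_weight_pos[OF assms, of h] by (simp add: total_weight_def)
qed

lemma set_pmf_exp_weights:
  assumes "2 \<le> k"
  shows "set_pmf (exp_weights n k h x) \<subseteq> {1..k}"
proof (cases "concentrated n k h x")
  case True
  then have x: "x \<in> instances n k" and n: "0 < n" by (auto simp: concentrated_def)
  have "set_pmf (pmf_of_list (weighted_list n k h x)) \<subseteq> set (map fst (weighted_list n k h x))"
    by (rule set_pmf_of_list[OF pmf_of_list_wf_weighted_list[OF assms n]])
  also have "\<dots> \<subseteq> {1..k}" using instances_nth[OF x] by (auto simp: weighted_list_def)
  finally show ?thesis using True by (simp add: exp_weights_def)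
qed (use assms in \<open>simp add: exp_weights_def\<close>)

lemma exp_weights_valid: "2 \<le> k \<Longrightarrow> valid_learner k (exp_weights n k)"
  unfolding valid_learner_def using set_pmf_exp_weights by blast

lemma pmf_exp_weights_concentrated:
  assumes "2 \<le> k" "concentrated n k h x"
  shows "pmf (exp_weights n k h x) j = vote n k h x j"
proof -
  have n: "0 < n" using assms(2) by (simp add: concentrated_def)
  have "pmf (exp_weights n k h x) j = sum_list (map snd (filter (\<lambda>z. fst z = j) (weighted_list n k h x)))"
    using assms(2) pmf_pmf_of_list[OF pmf_of_list_wf_weighted_list[OF assms(1) n]]
    by (simp add: exp_weights_def)
  also have "\<dots> = (\<Sum>i\<in>set (filter (\<lambda>i. x ! i = j) [0..<n]). weight k h i / total_weight n k h)"
    by (simp add: weighted_list_def filter_map o_def sum_list_distinct_conv_sum_set)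
  also have "set (filter (\<lambda>i. x ! i = j) [0..<n]) = {i\<in>{..<n}. x ! i = j}" by auto
  finally show ?thesis by (simp add: vote_def sum_divide_distrib)
qed

lemma pmf_exp_weights_uniform:
  "\<not> concentrated n k h x \<Longrightarrow> j \<in> {1..k} \<Longrightarrow> pmf (exp_weights n k h x) j = 1 / real k"
  by (simp add: exp_weights_def)

lemma sum_weight_if:
  assumes "2 \<le> k" "0 < n"
  shows "(\<Sum>i<n. weight k h i * (if x ! i = j then \<alpha> else \<beta>)) =
    total_weight n k h * (\<alpha> * vote n k h x j + \<beta> * (1 - vote n k h x j))"
proof -
  let ?G = "\<Sum>i\<in>{i\<in>{..<n}. x ! i = j}. weight k h i"
  have "(\<Sum>i<n. weight k h i) = ?G + (\<Sum>i\<in>{i\<in>{..<n}. x ! i \<noteq> j}. weight k h i)"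
    using sum.If_cases[of "{..<n}" "\<lambda>i. x ! i = j" "weight k h" "weight k h"]
    by (simp add: Int_def Compl_eq)
  moreover have "(\<Sum>i<n. weight k h i * (if x ! i = j then \<alpha> else \<beta>)) =
      \<alpha> * ?G + \<beta> * (\<Sum>i\<in>{i\<in>{..<n}. x ! i \<noteq> j}. weight k h i)"
    using sum.If_cases[of "{..<n}" "\<lambda>i. x ! i = j" "\<lambda>i. weight k h i * \<alpha>" "\<lambda>i. weight k h i * \<beta>"]
    by (simp add: Int_def Compl_eq if_distrib sum_distrib_left mult.commute)
  moreover have "total_weight n k h * (\<alpha> * vote n k h x j + \<beta> * (1 - vote n k h x j)) =
      \<alpha> * ?G + \<beta> * (total_weight n k h - ?G)"
    using total_weight_pos[OF assms, of h] by (simp add: vote_def field_simps)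
  ultimately show ?thesis by (simp add: total_weight_def)
qed

lemma total_weight_snoc:
  assumes "2 \<le> k" "0 < n"
  shows "total_weight n k (h @ [(x, yh = y, yh)]) =
    total_weight n k h * weight_factor (decay k) (vote n k h x) y yh"
proof (cases "yh = y")
  case True
  have "total_weight n k (h @ [(x, yh = y, yh)]) = (\<Sum>i<n. weight k h i * (if x ! i = y then 1 else decay k))"
    unfolding total_weight_def using True by (auto simp: weight_def intro!: sum.cong)
  then show ?thesis using True by (simp add: sum_weight_if[OF assms] weight_factor_def algebra_simps)
next
  case False
  have "total_weight n k (h @ [(x, yh = y, yh)]) = (\<Sum>i<n. weight k h i * (if x ! i = yh then decay k else 1))"
    unfolding total_weight_def using False by (auto simp: weight_def intro!: sum.cong)
  then show ?thesis using False by (simp add: sum_weight_if[OF assms] weight_factor_def algebra_simps)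
qed

lemma potential_step:
  assumes k: "2 \<le> k" and n: "0 < n" and x: "x \<in> instances n k" and y: "y \<in> {1..k}"
  shows "(\<Sum>yh\<in>{1..k}. pmf (exp_weights n k h x) yh *
            ((if yh = y then 0 else 1) + potential n k r (h @ [(x, yh = y, yh)]))) \<le> potential n k r h"
proof -
  let ?\<pi> = "exp_weights n k h x" and ?a = "vote n k h x" and ?\<epsilon> = "decay k" and ?D = "potential_scale k"
  let ?loss = "\<lambda>yh. (if yh = y then 0 else 1) + ?D * ln (weight_factor ?\<epsilon> ?a y yh)"
  have e: "0 < ?\<epsilon>" "?\<epsilon> < 1" using decay_scale_bounds[OF k] by auto
  have nn: "\<And>j. 0 \<le> ?a j" using vote_nonneg[OF k n] .
  have s1: "(\<Sum>j\<in>{1..k}. ?a j) = 1" using sum_vote[OF k n x] .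
  have le1: "\<And>j. j \<in> {1..k} \<Longrightarrow> ?a j \<le> 1" using le_one_of_sum_eq_one[OF _ nn s1] by simp
  have pot: "potential n k r (h @ [(x, yh = y, yh)]) = potential n k r h + ?D * ln (weight_factor ?\<epsilon> ?a y yh)"
    if "yh \<in> {1..k}" for yh
    using weight_factor_pos[where a = "?a", OF e nn le1[OF that] nn le1[OF y]] total_weight_pos[OF k n, of h]
    by (simp add: potential_def total_weight_snoc[OF k n] ln_mult algebra_simps)
  have loss: "(\<Sum>yh\<in>{1..k}. pmf ?\<pi> yh * ?loss yh) \<le> 0"
  proof (cases "concentrated n k h x")
    case True
    then show ?thesis
      using weighted_play_potential_step[OF nn s1 y e decay_scale_bounds(4)[OF k]]
      by (simp add: pmf_exp_weights_concentrated[OF k] concentrated_def)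
  next
    case False
    then have "(\<Sum>j\<in>{1..k}. (?a j)\<^sup>2) < 1 / (?D * (1 - ?\<epsilon>))"
      using x n by (simp add: concentrated_def)
    from uniform_play_potential_step[OF nn s1 y e(1) _ _ this] decay_scale_bounds[OF k]
    show ?thesis using False by (simp add: pmf_exp_weights_uniform)
  qed
  have "(\<Sum>yh\<in>{1..k}. pmf ?\<pi> yh * ((if yh = y then 0 else 1) + potential n k r (h @ [(x, yh = y, yh)])))
      = potential n k r h * (\<Sum>yh\<in>{1..k}. pmf ?\<pi> yh) + (\<Sum>yh\<in>{1..k}. pmf ?\<pi> yh * ?loss yh)"
    by (simp add: pot sum_distrib_left sum.distrib algebra_simps)
  also have "\<dots> \<le> potential n k r h"
    using loss sum_pmf_eq_1[OF _ set_pmf_exp_weights[OF k]] by simp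
  finally show ?thesis .
qed

lemma potential_nonneg:
  assumes k: "2 \<le> k" and i: "i < n" "mistakes h i \<le> r"
  shows "0 \<le> potential n k r h"
proof -
  have e: "0 < decay k" "decay k \<le> 1" using decay_scale_bounds[OF k] by auto
  have "decay k ^ r \<le> decay k ^ mistakes h i" using e i by (intro power_decreasing) auto
  also have "\<dots> \<le> total_weight n k h" unfolding total_weight_def weight_def
    by (rule member_le_sum) (use i e in auto)
  finally have "ln (decay k ^ r) \<le> ln (total_weight n k h)"
    using e total_weight_pos[OF k, of n h] i by (subst ln_le_cancel_iff) auto
  moreover have "ln (decay k ^ r) = - 3 * real r * ln (real k)"
    using k by (simp add: ln_realpow decay_def ln_div)
  ultimately show ?thesis
    using decay_scale_bounds(3)[OF k] unfolding potential_def by simp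
qed

lemma potential_Nil:
  assumes "2 \<le> k"
  shows "potential n k r [] = 12 * real k * log (real k) (real n) + 36 * real k * real r"
proof -
  have "0 < ln (real k)" using assms by simp
  then show ?thesis
    by (simp add: potential_def total_weight_def weight_def potential_scale_def log_def field_simps)
qed


lemma game_val_exp_weights_le_potential:
  assumes k: "2 \<le> k" and n: "0 < n" and adv: "valid_adap_adv n k r ax lab"
  shows "realizable n k r h \<Longrightarrow> game_val (exp_weights n k) ax lab T h \<le> potential n k r h"
proof (induction T arbitrary: h)
  case 0
  then obtain i where "i < n" "mistakes h i \<le> r" using realizable_imp_mistakes_le by blast
  then show ?case using potential_nonneg[OF k] by simp
next
  case (Suc T)
  let ?\<pi> = "exp_weights n k h (ax h)" let ?\<tau> = "lab h ?\<pi>"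
  let ?F = "\<lambda>yh y. (if yh = y then 0 else 1) + game_val (exp_weights n k) ax lab T (h @ [(ax h, yh = y, yh)])"
  have x: "ax h \<in> instances n k" and \<tau>: "set_pmf ?\<tau> \<subseteq> {1..k}"
    and next_realizable: "\<And>y yh. y \<in> set_pmf ?\<tau> \<Longrightarrow> yh \<in> {1..k} \<Longrightarrow>
      realizable n k r (h @ [(ax h, yh = y, yh)])"
    using adv Suc.prems unfolding valid_adap_adv_def by blast+
  have "game_val (exp_weights n k) ax lab (Suc T) h =
      (\<Sum>yh\<in>{1..k}. \<Sum>y\<in>{1..k}. pmf ?\<pi> yh * pmf ?\<tau> y * ?F yh y)"
    by (rule game_val_Suc_sum) (use set_pmf_exp_weights[OF k] \<tau> in auto)
  also have "\<dots> = (\<Sum>y\<in>{1..k}. pmf ?\<tau> y * (\<Sum>yh\<in>{1..k}. pmf ?\<pi> yh * ?F yh y))"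
    by (subst sum.swap, rule sum.cong[OF refl], subst sum_distrib_left, rule sum.cong[OF refl])
      (simp add: ac_simps)
  also have "\<dots> \<le> (\<Sum>y\<in>{1..k}. pmf ?\<tau> y * potential n k r h)"
  proof (rule sum_mono)
    fix y assume y: "y \<in> {1..k}"
    show "pmf ?\<tau> y * (\<Sum>yh\<in>{1..k}. pmf ?\<pi> yh * ?F yh y) \<le> pmf ?\<tau> y * potential n k r h"
    proof (cases "y \<in> set_pmf ?\<tau>")
      case True
      have "(\<Sum>yh\<in>{1..k}. pmf ?\<pi> yh * ?F yh y) \<le>
          (\<Sum>yh\<in>{1..k}. pmf ?\<pi> yh * ((if yh = y then 0 else 1) + potential n k r (h @ [(ax h, yh = y, yh)])))"
        using Suc.IH[OF next_realizable[OF True]] by (intro sum_mono mult_left_mono) auto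
      also have "\<dots> \<le> potential n k r h" by (rule potential_step[OF k n x y])
      finally show ?thesis by (intro mult_left_mono) auto
    qed (simp add: set_pmf_iff)
  qed
  also have "\<dots> = potential n k r h"
    using sum_pmf_eq_1[of "{1..k}" ?\<tau>] \<tau> by (simp add: sum_distrib_right[symmetric])
  finally show ?case .
qed

lemma opt_bandit_adap_upper:
  assumes k: "2 \<le> k" and n: "0 < n"
  shows "opt_bandit_adap n k r \<le> ereal (12 * real k * log (real k) (real n) + 36 * real k * real r)"
proof -
  have "opt_bandit_adap n k r \<le> (SUP A \<in> {(ax, lab, T). valid_adap_adv n k r ax lab}.
          ereal (case A of (ax, lab, T) \<Rightarrow> game_val (exp_weights n k) ax lab T []))"
    unfolding opt_bandit_adap_def by (rule INF_lower) (simp add: exp_weights_valid[OF k])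
  also have "\<dots> \<le> ereal (potential n k r [])"
  proof (rule SUP_least, clarify)
    fix ax lab T assume "valid_adap_adv n k r ax lab"
    moreover have "realizable n k r []" using realizable_if_mistakes_le[OF k _ n] by simp
    ultimately show "ereal (game_val (exp_weights n k) ax lab T []) \<le> ereal (potential n k r [])"
      using game_val_exp_weights_le_potential[OF k n] by simp
  qed
  finally show ?thesis using potential_Nil[OF k] by simp
qed

section \<open>Lower bound: the rotating adversary\<close>

text \<open>The adversary declares correct the prediction of the least likely of the \<open>m\<close> experts
  \<open>i < k\<close> with at most \<open>r\<close> mistakes: either the learner errs, or it guessed a label of
  probability at most \<open>1/m\<close> and the other \<open>m - 1\<close> of these experts are charged a mistake.\<close>

definition rotating_instance :: "nat \<Rightarrow> nat \<Rightarrow> inst" where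
  "rotating_instance n k = map (\<lambda>i. if i < k then i + 1 else 1) [0..<n]"

definition live_experts :: "nat \<Rightarrow> nat \<Rightarrow> hist \<Rightarrow> nat set" where
  "live_experts k r h = {i. i < k \<and> mistakes h i \<le> r}"

definition least_likely_expert :: "nat \<Rightarrow> nat \<Rightarrow> hist \<Rightarrow> nat pmf \<Rightarrow> nat" where
  "least_likely_expert k r h \<pi> = arg_min_on (\<lambda>i. pmf \<pi> (i + 1)) (live_experts k r h)"

definition rotating_label :: "nat \<Rightarrow> nat \<Rightarrow> hist \<Rightarrow> nat pmf \<Rightarrow> nat pmf" where
  "rotating_label k r h \<pi> =
     return_pmf (if live_experts k r h \<noteq> {} then least_likely_expert k r h \<pi> + 1 else 1)"

lemma rotating_instance_nth: "i < n \<Longrightarrow> rotating_instance n k ! i = (if i < k then i + 1 else 1)"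
  by (simp add: rotating_instance_def)

lemma finite_live_experts [simp]: "finite (live_experts k r h)"
  by (simp add: live_experts_def)

lemma least_likely_expert:
  assumes "live_experts k r h \<noteq> {}"
  shows "least_likely_expert k r h \<pi> \<in> live_experts k r h"
    and "i \<in> live_experts k r h \<Longrightarrow> pmf \<pi> (least_likely_expert k r h \<pi> + 1) \<le> pmf \<pi> (i + 1)"
  using arg_min_if_finite[OF finite_live_experts assms, of "\<lambda>i. pmf \<pi> (i + 1)"]
  unfolding least_likely_expert_def by (auto simp: not_less)

lemma valid_rotating_adversary:
  assumes k: "2 \<le> k" and kn: "k \<le> n"
  shows "valid_adap_adv n k r (\<lambda>h. rotating_instance n k) (rotating_label k r)"
  unfolding valid_adap_adv_iff_keeps_realizable
proof (intro allI conjI impI ballI)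
  fix h \<pi>
  let ?x = "rotating_instance n k" and ?i = "least_likely_expert k r h \<pi>"
  show x: "?x \<in> instances n k" using kn k by (auto simp: rotating_instance_def instances_def)
  show "set_pmf (rotating_label k r h \<pi>) \<subseteq> {1..k}"
    using least_likely_expert(1)[of k r h \<pi>] k
    by (auto simp: rotating_label_def live_experts_def Suc_le_eq)
  fix y assume R: "realizable n k r h" and y: "y \<in> set_pmf (rotating_label k r h \<pi>)"
  show "keeps_realizable n k r h ?x y"
  proof (cases "live_experts k r h = {}")
    case False
    then have "?i < k" "mistakes h ?i \<le> r" using least_likely_expert(1) by (auto simp: live_experts_def)
    moreover have "y = ?x ! ?i" using y False calculation kn by (simp add: rotating_label_def rotating_instance_nth)
    ultimately show ?thesis using keeps_realizable_expert_label[OF k R x] kn by simp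
  next
    case True
    obtain i where i: "i < n" "mistakes h i \<le> r" using realizable_imp_mistakes_le[OF R] by blast
    then have "y = ?x ! i" using y True by (auto simp: rotating_label_def rotating_instance_nth live_experts_def)
    then show ?thesis using keeps_realizable_expert_label[OF k R x i] by simp
  qed
qed

definition slack :: "nat \<Rightarrow> nat \<Rightarrow> hist \<Rightarrow> real" where
  "slack k r h = (\<Sum>i<k. real (Suc r - mistakes h i))"

definition excess_slack :: "nat \<Rightarrow> nat \<Rightarrow> hist \<Rightarrow> real" where
  "excess_slack k r h = max 0 (slack k r h - real (Suc r))"

lemma slack_le_card_live_experts: "slack k r h \<le> real (Suc r) * real (card (live_experts k r h))"
proof -
  have "slack k r h \<le> (\<Sum>i<k. if mistakes h i \<le> r then real (Suc r) else 0)"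
    unfolding slack_def by (rule sum_mono) auto
  also have "\<dots> = (\<Sum>i\<in>live_experts k r h. real (Suc r))"
    by (simp add: sum.If_cases live_experts_def Int_def lessThan_def conj_commute)
  finally show ?thesis by (simp add: mult.commute)
qed

lemma excess_slack_snoc:
  "excess_slack k r h - real (card {i\<in>live_experts k r h. refutes obs i}) \<le> excess_slack k r (h @ [obs])"
proof -
  have "slack k r h - slack k r (h @ [obs]) \<le> (\<Sum>i<k. if mistakes h i \<le> r \<and> refutes obs i then 1 else 0)"
    unfolding slack_def sum_subtractf[symmetric] by (rule sum_mono) (auto simp: of_nat_diff)
  also have "\<dots> = real (card {i\<in>live_experts k r h. refutes obs i})"
    by (simp add: sum.If_cases live_experts_def Int_def lessThan_def conj_commute conj_left_commute)
  finally show ?thesis by (simp add: excess_slack_def)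
qed

lemma rotating_round_bound:
  fixes \<pi> :: "nat pmf" and m M :: real
  assumes \<pi>: "set_pmf \<pi> \<subseteq> {1..k}" and y: "y \<in> {1..k}"
    and m: "2 \<le> m" "m * pmf \<pi> y \<le> 1"
  shows "M / 6 \<le> (\<Sum>yh\<in>{1..k}. pmf \<pi> yh *
    ((if yh = y then 0 else 1) + (M - (if yh = y then m - 1 else 1) - 1) / 6))" (is "_ \<le> sum ?g _")
proof -
  have "(\<Sum>yh\<in>{1..k} - {y}. pmf \<pi> yh) = 1 - pmf \<pi> y"
    using sum.remove[of "{1..k}" y "pmf \<pi>"] y sum_pmf_eq_1[OF _ \<pi>] by simp
  then have "sum ?g ({1..k} - {y}) = (1 - pmf \<pi> y) * (1 + (M - 2) / 6)"
    by (simp add: sum_distrib_right[symmetric])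
  moreover have "?g y = pmf \<pi> y * ((M - m) / 6)" by simp
  moreover have "sum ?g {1..k} = ?g y + sum ?g ({1..k} - {y})"
    using y by (intro sum.remove) auto
  moreover have "pmf \<pi> y \<le> 1/2" using m mult_right_mono[of 2 m "pmf \<pi> y"] by simp
  ultimately show ?thesis using m by (simp add: field_simps)
qed
lemma card_live_experts_mult_least_likely:
  assumes live: "live_experts k r h \<noteq> {}" and \<pi>: "set_pmf \<pi> \<subseteq> {1..k}"
  shows "real (card (live_experts k r h)) * pmf \<pi> (least_likely_expert k r h \<pi> + 1) \<le> 1"
proof -
  have "real (card (live_experts k r h)) * pmf \<pi> (least_likely_expert k r h \<pi> + 1)
      \<le> (\<Sum>i\<in>live_experts k r h. pmf \<pi> (i + 1))"
    using sum_mono[of "live_experts k r h" "\<lambda>_. pmf \<pi> (least_likely_expert k r h \<pi> + 1)"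
        "\<lambda>i. pmf \<pi> (i + 1)"] least_likely_expert(2)[OF live] by simp
  also have "\<dots> = (\<Sum>j\<in>Suc ` live_experts k r h. pmf \<pi> j)" by (simp add: sum.reindex)
  also have "\<dots> \<le> (\<Sum>j\<in>{1..k}. pmf \<pi> j)"
    by (rule sum_mono2) (auto simp: live_experts_def)
  also have "\<dots> = 1" using sum_pmf_eq_1[OF _ \<pi>] by simp
  finally show ?thesis .
qed

lemma card_refuted_live_experts:
  assumes kn: "k \<le> n" and i0: "i0 \<in> live_experts k r h"
  shows "real (card {i\<in>live_experts k r h. refutes (rotating_instance n k, yh = i0 + 1, yh) i})
    \<le> (if yh = i0 + 1 then real (card (live_experts k r h)) - 1 else 1)"
proof (cases "yh = i0 + 1")
  case True
  have "{i\<in>live_experts k r h. refutes (rotating_instance n k, yh = i0 + 1, yh) i} \<subseteq> live_experts k r h - {i0}"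
    using True kn by (auto simp: live_experts_def rotating_instance_nth)
  then have "card {i\<in>live_experts k r h. refutes (rotating_instance n k, yh = i0 + 1, yh) i}
      \<le> card (live_experts k r h) - 1"
    using card_mono[of "live_experts k r h - {i0}"] i0 by fastforce
  then show ?thesis using True i0 card_gt_0_iff[of "live_experts k r h"] by (auto simp: of_nat_diff)
next
  case False
  have "{i\<in>live_experts k r h. refutes (rotating_instance n k, yh = i0 + 1, yh) i} \<subseteq> {yh - 1}"
    using False kn by (auto simp: live_experts_def rotating_instance_nth)
  then show ?thesis using False card_mono[of "{yh - 1}"] by fastforce
qed

lemma two_le_card_live_experts:
  assumes "excess_slack k r h \<noteq> 0"
  shows "2 \<le> card (live_experts k r h)"
proof -
  have "real (Suc r) < slack k r h"
    using assms by (auto simp: excess_slack_def max_def split: if_splits)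
  also have "\<dots> \<le> real (Suc r) * real (card (live_experts k r h))"
    by (rule slack_le_card_live_experts)
  finally have "1 < real (card (live_experts k r h))"
    using mult_less_cancel_left1[of "real (Suc r)"] by simp
  then show ?thesis by simp
qed

lemma game_val_rotating_ge:
  assumes k: "2 \<le> k" and kn: "k \<le> n" and L: "\<And>h x. set_pmf (L h x) \<subseteq> {1..k}"
  shows "min (excess_slack k r h) (real T) / 6 \<le>
    game_val L (\<lambda>h. rotating_instance n k) (rotating_label k r) T h"
proof (induction T arbitrary: h)
  case 0
  show ?case by (simp add: excess_slack_def)
next
  case (Suc T)
  let ?G = "game_val L (\<lambda>h. rotating_instance n k) (rotating_label k r)"
  let ?x = "rotating_instance n k" and ?\<pi> = "L h (rotating_instance n k)"
  show ?case
  proof (cases "excess_slack k r h = 0")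
    case True
    then show ?thesis using game_val_nonneg[of L _ _ "Suc T" h] by (simp del: game_val.simps)
  next
    case False
    define m where "m = card (live_experts k r h)"
    define y where "y = least_likely_expert k r h ?\<pi> + 1"
    define M where "M = min (excess_slack k r h) (real (Suc T))"
    define \<delta> where "\<delta> yh = (if yh = y then real m - 1 else 1)" for yh
    have m2: "2 \<le> m" using two_le_card_live_experts[OF False] by (simp add: m_def)
    then have live: "live_experts k r h \<noteq> {}" by (auto simp: m_def)
    then have i0: "y - 1 \<in> live_experts k r h" and y: "y \<in> {1..k}"
      using least_likely_expert(1) by (auto simp: y_def live_experts_def Suc_le_eq)
    have mass: "real m * pmf ?\<pi> y \<le> 1"
      using card_live_experts_mult_least_likely[OF live L] by (simp add: m_def y_def)
    have IH: "(M - \<delta> yh - 1) / 6 \<le> ?G T (h @ [(?x, yh = y, yh)])" if yh: "yh \<in> {1..k}" for yh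
    proof -
      have "excess_slack k r h - \<delta> yh \<le> excess_slack k r (h @ [(?x, yh = y, yh)])"
        using card_refuted_live_experts[OF kn i0, of yh] excess_slack_snoc[of k r h "(?x, yh = y, yh)"] y
        by (auto simp: \<delta>_def m_def)
      moreover have "0 \<le> \<delta> yh" using m2 by (simp add: \<delta>_def)
      ultimately have "M - \<delta> yh - 1 \<le> min (excess_slack k r (h @ [(?x, yh = y, yh)])) (real T)"
        by (auto simp: M_def min_def)
      then have "(M - \<delta> yh - 1) / 6 \<le> min (excess_slack k r (h @ [(?x, yh = y, yh)])) (real T) / 6"
        by (rule divide_right_mono) simp
      also have "\<dots> \<le> ?G T (h @ [(?x, yh = y, yh)])" by (rule Suc.IH)
      finally show ?thesis .
    qed
    have "M / 6 \<le> (\<Sum>yh\<in>{1..k}. pmf ?\<pi> yh * ((if yh = y then 0 else 1) + (M - \<delta> yh - 1) / 6))"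
      using rotating_round_bound[where m = "real m" and M = M, OF L y] m2 mass by (simp add: \<delta>_def)
    also have "\<dots> \<le> (\<Sum>yh\<in>{1..k}. pmf ?\<pi> yh * ((if yh = y then 0 else 1) + ?G T (h @ [(?x, yh = y, yh)])))"
      using IH by (intro sum_mono mult_left_mono) auto
    also have "\<dots> = ?G (Suc T) h"
      using live by (intro game_val_Suc_return[symmetric] L y) (simp add: rotating_label_def y_def)
    finally show ?thesis by (simp add: M_def)
  qed
qed

lemma excess_slack_Nil:
  assumes "1 \<le> k"
  shows "excess_slack k r [] = (real k - 1) * (real r + 1)"
proof -
  have "slack k r [] - real (Suc r) = (real k - 1) * (real r + 1)"
    by (simp add: slack_def algebra_simps)
  moreover have "0 \<le> (real k - 1) * (real r + 1)" using assms by simp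
  ultimately show ?thesis by (simp add: excess_slack_def)
qed

lemma opt_bandit_adap_ge_rotating:
  assumes k: "2 \<le> k" and kn: "k \<le> n"
  shows "ereal ((real k - 1) * (real r + 1) / 6) \<le> opt_bandit_adap n k r"
  unfolding opt_bandit_adap_def
proof (rule INF_greatest)
  fix L assume "L \<in> {L. valid_learner k L}"
  then have L: "\<And>h x. set_pmf (L h x) \<subseteq> {1..k}" by (simp add: valid_learner_def)
  let ?T = "(k - 1) * (r + 1)"
  have "real (k - 1) = real k - 1" using k by (simp add: of_nat_diff)
  then have "real ?T = (real k - 1) * (real r + 1)" by (simp only: of_nat_mult) simp
  then have "(real k - 1) * (real r + 1) / 6 \<le>
      game_val L (\<lambda>h. rotating_instance n k) (rotating_label k r) ?T []"
    using game_val_rotating_ge[OF k kn L, of r "[]" ?T] k by (simp add: excess_slack_Nil del: of_nat_mult)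
  then show "ereal ((real k - 1) * (real r + 1) / 6) \<le> (SUP A \<in> {(ax, lab, T). valid_adap_adv n k r ax lab}.
      ereal (case A of (ax, lab, T) \<Rightarrow> game_val L ax lab T []))"
    using valid_rotating_adversary[OF k kn]
    by (intro SUP_upper2[where i = "(\<lambda>h. rotating_instance n k, rotating_label k r, ?T)"]) auto
qed

section \<open>Lower bound: oblivious sequences of digit blocks\<close>

text \<open>\<open>guessing_loss u m = \<Sum>j = 1..min m u. 1 - j / u\<close> is the expected number of wrong guesses
  in \<open>m\<close> rounds of guessing a uniformly random one of \<open>u\<close> candidates, with yes/no feedback.\<close>

definition guessing_loss :: "nat \<Rightarrow> nat \<Rightarrow> real" where
  "guessing_loss u m = real (min m u) - real (min m u) * (real (min m u) + 1) / (2 * real u)"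

lemma guessing_loss_0 [simp]: "guessing_loss u 0 = 0"
  by (simp add: guessing_loss_def)

lemma guessing_loss_same: "1 \<le> k \<Longrightarrow> guessing_loss k k = (real k - 1) / 2"
  by (simp add: guessing_loss_def field_simps)

lemma guessing_loss_miss:
  assumes "1 \<le> u" "1 \<le> m"
  shows "guessing_loss u m \<le> 1 + guessing_loss u (m - 1)"
proof (cases "m \<le> u")
  case True
  then have "guessing_loss u m - guessing_loss u (m - 1) = 1 - real m / real u"
    using assms by (simp add: guessing_loss_def min_absorb1 of_nat_diff field_simps)
  moreover have "0 \<le> real m / real u" by simp
  ultimately show ?thesis by linarith
next
  case False
  then show ?thesis by (simp add: guessing_loss_def min_absorb2)
qed

lemma guessing_loss_hit_or_miss:
  assumes "1 \<le> u" "1 \<le> m"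
  shows "guessing_loss u m \<le> (real u - 1) / real u * (1 + guessing_loss (u - 1) (m - 1))"
proof (cases "u = 1")
  case True
  then show ?thesis using assms by (simp add: guessing_loss_def)
next
  case False
  define q where "q = min m u"
  have q1: "1 \<le> q" using assms by (simp add: q_def)
  have "min (m - 1) (u - 1) = q - 1" by (simp add: q_def)
  moreover have "real (u - 1) = real u - 1" "real (q - 1) = real q - 1"
    using assms q1 by (simp_all add: of_nat_diff)
  ultimately have "(real u - 1) / real u * (1 + guessing_loss (u - 1) (m - 1)) =
      real q - real q * (real q + 1) / (2 * real u)"
    using False assms by (simp add: guessing_loss_def field_simps)
  then show ?thesis by (simp add: guessing_loss_def q_def)
qed

definition digit :: "nat \<Rightarrow> nat \<Rightarrow> nat \<Rightarrow> nat" where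
  "digit k q e = e div k ^ q mod k"

fun from_digits :: "nat \<Rightarrow> nat list \<Rightarrow> nat" where
  "from_digits k [] = 0"
| "from_digits k (c # cs) = c + k * from_digits k cs"

lemma from_digits_less: "\<forall>c\<in>set cs. c < k \<Longrightarrow> from_digits k cs < k ^ length cs"
proof (induction cs)
  case (Cons c cs)
  then have "k * (from_digits k cs + 1) \<le> k * k ^ length cs" by (intro mult_le_mono2) simp
  moreover have "c + k * from_digits k cs < k * (from_digits k cs + 1)" using Cons.prems by simp
  ultimately show ?case by simp
qed simp

lemma digit_from_digits:
  "\<forall>c\<in>set cs. c < k \<Longrightarrow> q < length cs \<Longrightarrow> digit k q (from_digits k cs) = cs ! q"
proof (induction cs arbitrary: q)
  case (Cons c cs)
  then have c: "c < k" by simp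
  show ?case
  proof (cases q)
    case 0
    then show ?thesis using c by (simp add: digit_def)
  next
    case (Suc q')
    have "(c + k * from_digits k cs) div k = from_digits k cs" using c by simp
    then have "digit k q (from_digits k (c # cs)) = digit k q' (from_digits k cs)"
      by (simp add: digit_def Suc div_mult2_eq mult.commute)
    then show ?thesis using Cons Suc by simp
  qed
qed simp

definition digit_instance :: "nat \<Rightarrow> nat \<Rightarrow> nat \<Rightarrow> inst" where
  "digit_instance n k q = map (\<lambda>e. digit k q e + 1) [0..<n]"

definition label_seqs :: "nat \<Rightarrow> nat \<Rightarrow> nat list set" where
  "label_seqs k d = {ys. length ys = d \<and> set ys \<subseteq> {1..k}}"

definition digit_sequence :: "nat \<Rightarrow> nat \<Rightarrow> nat \<Rightarrow> nat list \<Rightarrow> (inst \<times> nat) list" where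
  "digit_sequence n k d ys = map (\<lambda>l. (digit_instance n k (l div k), ys ! (l div k))) [0..<d * k]"

lemma digit_instance_in_instances: "1 \<le> k \<Longrightarrow> digit_instance n k q \<in> instances n k"
  by (auto simp: digit_instance_def instances_def digit_def Suc_le_eq)

lemma digit_instance_nth: "e < n \<Longrightarrow> digit_instance n k q ! e = digit k q e + 1"
  by (simp add: digit_instance_def)

lemma finite_label_seqs: "finite (label_seqs k d)"
  using finite_lists_length_eq[of "{1..k}" d] by (simp add: label_seqs_def conj_commute)

lemma digit_sequence_in_P:
  assumes k: "2 \<le> k" and kd: "k ^ d \<le> n" and ys: "ys \<in> label_seqs k d"
  shows "in_P n k r (digit_sequence n k d ys)"
proof -
  have len: "length ys = d" and ysk: "\<And>q. q < d \<Longrightarrow> ys ! q \<in> {1..k}"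
    using ys by (auto simp: label_seqs_def dest!: nth_mem)
  have block: "l div k < d" if "l < d * k" for l
    using that k by (simp add: div_less_iff_less_mult mult.commute)
  define e where "e = from_digits k (map (\<lambda>y. y - 1) ys)"
  have digits: "\<forall>c\<in>set (map (\<lambda>y. y - 1) ys). c < k"
    using ys by (fastforce simp: label_seqs_def)
  have e: "e < n" using from_digits_less[OF digits] kd len by (simp add: e_def)
  have "digit_instance n k q ! e = ys ! q" if "q < d" for q
    using digit_from_digits[OF digits, of q] ysk[OF that] that e len
    by (simp add: e_def digit_instance_nth)
  then have "filter (\<lambda>(x, y). x ! e \<noteq> y) (digit_sequence n k d ys) = []"
    using block by (auto simp: digit_sequence_def filter_empty_conv)
  moreover have "x \<in> instances n k \<and> y \<in> {1..k}" if "(x, y) \<in> set (digit_sequence n k d ys)" for x y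
    using that block ysk k digit_instance_in_instances by (auto simp: digit_sequence_def)
  ultimately show ?thesis using e unfolding in_P_def by auto
qed

definition candidates :: "nat \<Rightarrow> nat \<Rightarrow> hist \<Rightarrow> nat set" where
  "candidates k q h = {v\<in>{1..k}. \<forall>\<tau><length h. \<tau> div k = q \<longrightarrow>
     ((v = snd (snd (h ! \<tau>))) \<longleftrightarrow> fst (snd (h ! \<tau>)))}"

definition consistent_seqs :: "nat \<Rightarrow> nat \<Rightarrow> hist \<Rightarrow> nat list set" where
  "consistent_seqs k d h = {ys\<in>label_seqs k d. \<forall>\<tau><length h.
     (ys ! (\<tau> div k) = snd (snd (h ! \<tau>))) \<longleftrightarrow> fst (snd (h ! \<tau>))}"

lemma candidates_subset: "candidates k q h \<subseteq> {1..k}"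
  by (auto simp: candidates_def)

lemma finite_candidates [simp]: "finite (candidates k q h)"
  using finite_subset[OF candidates_subset] by simp

lemma candidates_Nil: "candidates k q [] = {1..k}"
  by (auto simp: candidates_def)

lemma candidates_snoc:
  "candidates k q (h @ [(x, c, yh)]) =
     (if length h div k = q then {v\<in>candidates k q h. (v = yh) \<longleftrightarrow> c} else candidates k q h)"
  by (auto simp: candidates_def nth_append less_Suc_eq)

lemma finite_consistent_seqs [simp]: "finite (consistent_seqs k d h)"
  by (rule finite_subset[OF _ finite_label_seqs]) (auto simp: consistent_seqs_def)

lemma consistent_seqs_Nil: "consistent_seqs k d [] = label_seqs k d"
  by (simp add: consistent_seqs_def)

lemma consistent_seqs_snoc:
  "consistent_seqs k d (h @ [(x, c, yh)]) = {ys\<in>consistent_seqs k d h. (ys ! (length h div k) = yh) = c}"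
  by (auto simp: consistent_seqs_def nth_append less_Suc_eq)

lemma consistent_seqs_split:
  "consistent_seqs k d h = consistent_seqs k d (h @ [(x, True, yh)]) \<union> consistent_seqs k d (h @ [(x, False, yh)])"
  "consistent_seqs k d (h @ [(x, True, yh)]) \<inter> consistent_seqs k d (h @ [(x, False, yh)]) = {}"
  by (auto simp: consistent_seqs_snoc)

lemma consistent_seq_candidate:
  assumes "ys \<in> consistent_seqs k d h" "length h div k < d"
  shows "ys ! (length h div k) \<in> candidates k (length h div k) h"
proof -
  have "ys ! (length h div k) \<in> set ys" "set ys \<subseteq> {1..k}"
    using assms by (auto simp: consistent_seqs_def label_seqs_def)
  then show ?thesis using assms(1) by (auto simp: consistent_seqs_def candidates_def)
qed

text \<open>Replacing the current block's entry \<open>v\<close> by another candidate \<open>w\<close> keeps a label sequence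
  consistent; hence every candidate is the current entry of equally many consistent
  sequences.\<close>

lemma card_consistent_seqs_entry_le:
  assumes v: "v \<in> candidates k p h" and w: "w \<in> candidates k p h"
    and p: "p = length h div k" and pd: "p < d"
  shows "card {ys\<in>consistent_seqs k d h. ys ! p = v} \<le> card {ys\<in>consistent_seqs k d h. ys ! p = w}"
proof (rule card_inj_on_le)
  show "inj_on (\<lambda>ys. ys[p := w]) {ys\<in>consistent_seqs k d h. ys ! p = v}"
    by (rule inj_onI) (metis (mono_tags, lifting) list_update_id list_update_overwrite mem_Collect_eq)
  show "(\<lambda>ys. ys[p := w]) ` {ys\<in>consistent_seqs k d h. ys ! p = v} \<subseteq> {ys\<in>consistent_seqs k d h. ys ! p = w}"
  proof (rule image_subsetI)
    fix ys assume "ys \<in> {ys\<in>consistent_seqs k d h. ys ! p = v}"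
    then have ys: "ys \<in> consistent_seqs k d h" by simp
    have len: "length ys = d" and st: "set ys \<subseteq> {1..k}"
      using ys(1) by (auto simp: consistent_seqs_def label_seqs_def)
    have "w \<in> {1..k}" using w candidates_subset by blast
    then have "set (ys[p := w]) \<subseteq> {1..k}"
      using st by (auto dest: subsetD[OF set_update_subset_insert])
    moreover have "(ys[p := w] ! (\<tau> div k) = snd (snd (h ! \<tau>))) \<longleftrightarrow> fst (snd (h ! \<tau>))"
      if t: "\<tau> < length h" for \<tau>
    proof -
      have "\<tau> div k \<le> p" using t p by (simp add: div_le_mono)
      then show ?thesis
        using ys(1) w t pd len by (cases "\<tau> div k = p") (auto simp: consistent_seqs_def candidates_def)
    qed
    ultimately show "ys[p := w] \<in> {ys\<in>consistent_seqs k d h. ys ! p = w}"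
      using len pd by (simp add: consistent_seqs_def label_seqs_def)
  qed
qed simp

lemma card_consistent_seqs_eq:
  assumes p: "p = length h div k" and pd: "p < d" and w: "w \<in> candidates k p h"
  shows "real (card (consistent_seqs k d h)) =
    real (card (candidates k p h)) * real (card {ys\<in>consistent_seqs k d h. ys ! p = w})"
proof -
  have "card (consistent_seqs k d h) = (\<Sum>ys\<in>consistent_seqs k d h. 1)" by simp
  also have "\<dots> = (\<Sum>v\<in>candidates k p h. \<Sum>ys\<in>{ys\<in>consistent_seqs k d h. ys ! p = v}. 1)"
    by (rule sum.group[symmetric]) (use consistent_seq_candidate p pd in auto)
  also have "\<dots> = (\<Sum>v\<in>candidates k p h. card {ys\<in>consistent_seqs k d h. ys ! p = v})" by simp
  also have "\<dots> = (\<Sum>v\<in>candidates k p h. card {ys\<in>consistent_seqs k d h. ys ! p = w})"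
    using card_consistent_seqs_entry_le[OF _ w p pd] card_consistent_seqs_entry_le[OF w _ p pd]
    by (intro sum.cong) (auto intro: antisym)
  finally show ?thesis by (simp flip: of_nat_mult)
qed

definition block_left :: "nat \<Rightarrow> nat \<Rightarrow> nat \<Rightarrow> nat" where
  "block_left k q l = min k (Suc q * k - l)"

definition digit_potential :: "nat \<Rightarrow> nat \<Rightarrow> hist \<Rightarrow> real" where
  "digit_potential k d h = (\<Sum>q<d. guessing_loss (card (candidates k q h)) (block_left k q (length h)))"

lemma block_left_Suc:
  assumes "0 < k"
  shows "block_left k q (Suc l) = (if q = l div k then block_left k q l - 1 else block_left k q l)"
proof -
  define p where "p = l div k"
  define t where "t = l mod k"
  have l: "l = p * k + t" and t: "t < k" using assms by (simp_all add: p_def t_def)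
  consider "q < p" | "q = p" | "p < q" by linarith
  then show ?thesis
  proof cases
    case 1
    then have "Suc q * k \<le> l" using l mult_le_mono1[of "Suc q" p k] by simp
    then show ?thesis using 1 by (simp add: block_left_def flip: p_def)
  next
    case 2
    then have "Suc q * k - l = k - t" using l by simp
    then show ?thesis using 2 t by (simp add: block_left_def flip: p_def)
  next
    case 3
    then have "Suc (Suc p) * k \<le> Suc q * k" by (intro mult_le_mono1) simp
    then have "k \<le> Suc q * k - Suc l" using l t by simp
    then show ?thesis using 3 by (simp add: block_left_def flip: p_def)
  qed
qed
lemma block_left_current: "block_left k (l div k) l = k - l mod k"
proof -
  have "Suc (l div k) * k = l - l mod k + k" by (simp add: minus_mod_eq_div_mult)
  then have "Suc (l div k) * k - l = k - l mod k" using mod_less_eq_dividend[of l k] by simp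
  then show ?thesis by (simp add: block_left_def)
qed

lemma block_left_finished: "Suc q * k \<le> l \<Longrightarrow> block_left k q l = 0"
  by (simp add: block_left_def)

lemma digit_potential_Nil: "digit_potential k d [] = real d * guessing_loss k k"
  by (simp add: digit_potential_def candidates_Nil block_left_def)

lemma digit_potential_finished:
  assumes "length h = d * k"
  shows "digit_potential k d h = 0"
  unfolding digit_potential_def
proof (intro sum.neutral ballI)
  fix q assume "q \<in> {..<d}"
  then have "Suc q * k \<le> length h" using assms mult_le_mono1[of "Suc q" d k] by simp
  then show "guessing_loss (card (candidates k q h)) (block_left k q (length h)) = 0"
    by (simp add: block_left_finished)
qed

lemma digit_potential_snoc:
  assumes k: "0 < k" and l: "length h < d * k" and p: "p = length h div k"
  shows "digit_potential k d (h @ [(x, c, yh)]) =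
    digit_potential k d h - guessing_loss (card (candidates k p h)) (block_left k p (length h))
      + guessing_loss (card (candidates k p (h @ [(x, c, yh)]))) (block_left k p (length h) - 1)"
proof -
  let ?h = "h @ [(x, c, yh)]"
  let ?f = "\<lambda>h' q. guessing_loss (card (candidates k q h')) (block_left k q (length h'))"
  have pd: "p \<in> {..<d}" using l k p by (simp add: div_less_iff_less_mult mult.commute)
  have "(\<Sum>q\<in>{..<d} - {p}. ?f ?h q) = (\<Sum>q\<in>{..<d} - {p}. ?f h q)"
  proof (rule sum.cong[OF refl])
    fix q assume "q \<in> {..<d} - {p}"
    then have "q \<noteq> length h div k" using p by simp
    then show "?f ?h q = ?f h q" by (simp add: candidates_snoc block_left_Suc[OF k])
  qed
  moreover have "?f ?h p = guessing_loss (card (candidates k p ?h)) (block_left k p (length h) - 1)"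
    using p by (simp add: block_left_Suc[OF k])
  moreover have "digit_potential k d ?h = ?f ?h p + (\<Sum>q\<in>{..<d} - {p}. ?f ?h q)"
    "digit_potential k d h = ?f h p + (\<Sum>q\<in>{..<d} - {p}. ?f h q)"
    unfolding digit_potential_def by (rule sum.remove[OF finite_lessThan pd])+
  ultimately show ?thesis by linarith
qed

lemma guessing_loss_Suc_0 [simp]: "guessing_loss (Suc 0) m = 0"
  by (cases m) (simp_all add: guessing_loss_def)

text \<open>The potential is a lower bound for the average loss over the consistent label sequences:
  guessing \<open>yh\<close> splits them into those confirming and those refuting the guess.\<close>

lemma digit_potential_step:
  assumes k: "0 < k" and l: "length h < d * k"
  shows "real (card (consistent_seqs k d h)) * digit_potential k d h \<le>
    real (card (consistent_seqs k d (h @ [(x, True, yh)]))) * digit_potential k d (h @ [(x, True, yh)]) +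
    real (card (consistent_seqs k d (h @ [(x, False, yh)]))) * (1 + digit_potential k d (h @ [(x, False, yh)]))"
proof -
  define p where "p = length h div k"
  define C where "C = candidates k p h"
  define u where "u = card C"
  define m where "m = block_left k p (length h)"
  define base where "base = digit_potential k d h - guessing_loss u m"
  define N where "N = real (card (consistent_seqs k d h))"
  let ?A = "consistent_seqs k d (h @ [(x, True, yh)])" and ?B = "consistent_seqs k d (h @ [(x, False, yh)])"
  have pd: "p < d" using l k by (simp add: p_def div_less_iff_less_mult mult.commute)
  have m1: "1 \<le> m"
    using mod_less_divisor[OF k, of "length h"] by (simp add: m_def p_def block_left_current)
  have F: "digit_potential k d (h @ [(x, c, yh)]) = base + guessing_loss (card (candidates k p (h @ [(x, c, yh)]))) (m - 1)" for c
    using digit_potential_snoc[OF k l p_def] by (simp add: base_def m_def u_def C_def)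
  have "card ?A + card ?B = card (consistent_seqs k d h)"
    using card_Un_disjoint[of ?A ?B] consistent_seqs_split by simp
  then have AB: "real (card ?A) + real (card ?B) = N" by (simp add: N_def flip: of_nat_add)
  have N0: "0 \<le> N" by (simp add: N_def)
  show ?thesis
  proof (cases "yh \<in> C")
    case True
    have u1: "1 \<le> u" using True by (auto simp: u_def C_def Suc_le_eq card_gt_0_iff)
    have "candidates k p (h @ [(x, True, yh)]) = {yh}" "candidates k p (h @ [(x, False, yh)]) = C - {yh}"
      using True by (auto simp: candidates_snoc p_def C_def)
    then have FA: "digit_potential k d (h @ [(x, True, yh)]) = base"
      and FB: "digit_potential k d (h @ [(x, False, yh)]) = base + guessing_loss (u - 1) (m - 1)"
      using F[of True] F[of False] True by (simp_all add: u_def)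
    have NA: "N = real u * real (card ?A)"
      using card_consistent_seqs_eq[OF p_def pd, of yh] True
      by (simp add: N_def u_def C_def consistent_seqs_snoc p_def)
    then have B: "real (card ?B) = (real u - 1) * real (card ?A)"
      using AB by (simp add: algebra_simps)
    have "real (card ?A) * base + real (card ?B) * (1 + base + guessing_loss (u - 1) (m - 1))
        = N * (base + (real u - 1) / real u * (1 + guessing_loss (u - 1) (m - 1)))"
      unfolding NA B using u1 by (simp add: field_simps)
    moreover have "N * (base + guessing_loss u m) \<le> N * (base + (real u - 1) / real u * (1 + guessing_loss (u - 1) (m - 1)))"
      using guessing_loss_hit_or_miss[OF u1 m1] N0 by (intro mult_left_mono) auto
    ultimately show ?thesis unfolding FA FB by (simp add: N_def base_def add.assoc)
  next
    case False
    have "?A = {}"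
      using consistent_seq_candidate[of _ k d h] pd False by (auto simp: consistent_seqs_snoc p_def C_def)
    moreover have "candidates k p (h @ [(x, False, yh)]) = C"
      using False by (auto simp: candidates_snoc p_def C_def)
    moreover have "N * (base + guessing_loss u m) \<le> N * (1 + base + guessing_loss u (m - 1))"
      using guessing_loss_miss[of u m] m1 N0 by (cases "u = 0") (auto intro: mult_left_mono simp: guessing_loss_def)
    ultimately show ?thesis using AB F[of False] by (simp add: N_def base_def u_def add.assoc)
  qed
qed

definition block_instance :: "nat \<Rightarrow> nat \<Rightarrow> hist \<Rightarrow> inst" where
  "block_instance n k h = digit_instance n k (length h div k)"

definition block_label :: "nat \<Rightarrow> nat list \<Rightarrow> hist \<Rightarrow> nat pmf \<Rightarrow> nat pmf" where
  "block_label k ys h \<pi> = return_pmf (ys ! (length h div k))"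

lemma obl_val_digit_sequence:
  "obl_val L (digit_sequence n k d ys) = game_val L (block_instance n k) (block_label k ys) (d * k) []"
proof -
  have len: "length (digit_sequence n k d ys) = d * k" by (simp add: digit_sequence_def)
  show ?thesis
    unfolding obl_val_def len
    by (rule game_val_cong_invariant[where R = "\<lambda>_. True" and N = "d * k"])
      (auto simp: digit_sequence_def block_instance_def block_label_def)
qed

lemma sum_game_val_block_ge:
  assumes k: "2 \<le> k" and L: "\<And>h x. set_pmf (L h x) \<subseteq> {1..k}"
  shows "length h + T = d * k \<Longrightarrow> real (card (consistent_seqs k d h)) * digit_potential k d h \<le>
    (\<Sum>ys\<in>consistent_seqs k d h. game_val L (block_instance n k) (block_label k ys) T h)"
proof (induction T arbitrary: h)
  case 0
  then show ?case by (simp add: digit_potential_finished)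
next
  case (Suc T)
  have l: "length h < d * k" using Suc.prems by simp
  define p where "p = length h div k"
  define N where "N = real (card (consistent_seqs k d h))"
  let ?x = "block_instance n k h" and ?\<pi> = "L h (block_instance n k h)"
  let ?G = "\<lambda>ys yh. (if yh = ys ! p then 0 else 1) +
    game_val L (block_instance n k) (block_label k ys) T (h @ [(?x, yh = ys ! p, yh)])"
  have pd: "p < d" using l k by (simp add: p_def div_less_iff_less_mult mult.commute)
  have step: "game_val L (block_instance n k) (block_label k ys) (Suc T) h = (\<Sum>yh\<in>{1..k}. pmf ?\<pi> yh * ?G ys yh)"
    if "ys \<in> consistent_seqs k d h" for ys
  proof (rule game_val_Suc_return[OF L])
    show "ys ! p \<in> {1..k}"
      using consistent_seq_candidate[OF that] candidates_subset pd unfolding p_def by blast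
  qed (simp add: block_label_def p_def)
  have per: "N * digit_potential k d h \<le> (\<Sum>ys\<in>consistent_seqs k d h. ?G ys yh)" for yh
  proof -
    let ?hc = "h @ [(?x, True, yh)]" and ?hw = "h @ [(?x, False, yh)]"
    have "(\<Sum>ys\<in>consistent_seqs k d h. ?G ys yh) =
        (\<Sum>ys\<in>consistent_seqs k d ?hc. ?G ys yh) + (\<Sum>ys\<in>consistent_seqs k d ?hw. ?G ys yh)"
      using consistent_seqs_split[of k d h ?x yh] by (simp add: sum.union_disjoint)
    also have "\<dots> = (\<Sum>ys\<in>consistent_seqs k d ?hc. game_val L (block_instance n k) (block_label k ys) T ?hc)
        + (\<Sum>ys\<in>consistent_seqs k d ?hw. 1 + game_val L (block_instance n k) (block_label k ys) T ?hw)"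
      by (intro arg_cong2[where f = "(+)"] sum.cong) (auto simp: consistent_seqs_snoc p_def)
    also have "\<dots> \<ge> real (card (consistent_seqs k d ?hc)) * digit_potential k d ?hc +
        real (card (consistent_seqs k d ?hw)) * (1 + digit_potential k d ?hw)"
      using Suc.IH[of ?hc] Suc.IH[of ?hw] Suc.prems by (simp add: sum.distrib algebra_simps)
    finally show ?thesis
      using digit_potential_step[OF _ l, of ?x yh] k by (simp add: N_def)
  qed
  have "(\<Sum>ys\<in>consistent_seqs k d h. game_val L (block_instance n k) (block_label k ys) (Suc T) h) =
      (\<Sum>yh\<in>{1..k}. pmf ?\<pi> yh * (\<Sum>ys\<in>consistent_seqs k d h. ?G ys yh))"
    by (simp only: step cong: sum.cong) (simp add: sum_distrib_left sum.swap[of _ "consistent_seqs k d h"])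
  also have "\<dots> \<ge> (\<Sum>yh\<in>{1..k}. pmf ?\<pi> yh * (N * digit_potential k d h))"
    by (intro sum_mono mult_left_mono per) simp
  also have "(\<Sum>yh\<in>{1..k}. pmf ?\<pi> yh * (N * digit_potential k d h)) = N * digit_potential k d h"
    using sum_pmf_eq_1[of "{1..k}" ?\<pi>] L by (simp flip: sum_distrib_right)
  finally show ?case by (simp add: N_def)
qed

lemma exists_digit_sequence_ge:
  assumes k: "2 \<le> k" and L: "\<And>h x. set_pmf (L h x) \<subseteq> {1..k}"
  shows "\<exists>ys\<in>label_seqs k d. real d * guessing_loss k k \<le> obl_val L (digit_sequence n k d ys)"
proof (rule ccontr)
  assume "\<not> ?thesis"
  then have less: "\<And>ys. ys \<in> label_seqs k d \<Longrightarrow> obl_val L (digit_sequence n k d ys) < real d * guessing_loss k k"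
    by auto
  have "replicate d 1 \<in> label_seqs k d" using k by (auto simp: label_seqs_def)
  then have ne: "label_seqs k d \<noteq> {}" by blast
  have "real (card (label_seqs k d)) * (real d * guessing_loss k k) \<le>
      (\<Sum>ys\<in>label_seqs k d. obl_val L (digit_sequence n k d ys))"
    using sum_game_val_block_ge[where L = L and n = n and h = "[]" and T = "d * k" and d = d, OF k L]
    by (simp add: consistent_seqs_Nil digit_potential_Nil obl_val_digit_sequence)
  also have "\<dots> < (\<Sum>ys\<in>label_seqs k d. real d * guessing_loss k k)"
    by (rule sum_strict_mono[OF finite_label_seqs ne less])
  finally show False by simp
qed

lemma opt_bandit_obl_ge_digits:
  assumes k: "2 \<le> k" and kd: "k ^ d \<le> n"
  shows "ereal (real d * (real k - 1) / 2) \<le> opt_bandit_obl n k r"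
  unfolding opt_bandit_obl_def
proof (rule INF_greatest)
  fix L assume "L \<in> {L. valid_learner k L}"
  then have L: "\<And>h x. set_pmf (L h x) \<subseteq> {1..k}" by (simp add: valid_learner_def)
  obtain ys where ys: "ys \<in> label_seqs k d" "real d * guessing_loss k k \<le> obl_val L (digit_sequence n k d ys)"
    using exists_digit_sequence_ge[where L = L and n = n and d = d, OF k L] by blast
  then show "ereal (real d * (real k - 1) / 2) \<le> (SUP S \<in> {S. in_P n k r S}. ereal (obl_val L S))"
    using digit_sequence_in_P[OF k kd ys(1)] k
    by (intro SUP_upper2[where i = "digit_sequence n k d ys"]) (auto simp: guessing_loss_same)
qed

section \<open>The bounds in terms of \<open>log\<^sub>k n\<close>\<close>

lemma one_le_log:
  assumes "2 \<le> k" "k \<le> n"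
  shows "1 \<le> log (real k) (real n)"
  using assms log_le_cancel_iff[of "real k" "real k" "real n"] by simp

lemma exists_power_le_gt_log:
  assumes k: "2 \<le> k" and kn: "k \<le> n"
  shows "\<exists>d. k ^ d \<le> n \<and> log (real k) (real n) < real d + 1 \<and> 1 \<le> d"
proof -
  define d where "d = nat \<lfloor>log (real k) (real n)\<rfloor>"
  have L1: "1 \<le> log (real k) (real n)" using one_le_log[OF k kn] .
  then have d: "real d = of_int \<lfloor>log (real k) (real n)\<rfloor>" by (simp add: d_def)
  have "real (k ^ d) = real k powr real d" using k by (simp add: powr_realpow)
  also have "\<dots> \<le> real k powr log (real k) (real n)" using k d by (simp add: powr_le_cancel_iff)
  also have "\<dots> = real n" using k kn by simp
  finally have "k ^ d \<le> n" by linarith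
  moreover have "1 \<le> d" using L1 by (simp add: d_def le_nat_iff)
  moreover have "log (real k) (real n) < real d + 1"
    using d real_of_int_floor_add_one_gt[of "log (real k) (real n)"] by linarith
  ultimately show ?thesis by blast
qed

lemma opt_bandit_obl_lower:
  assumes k: "2 \<le> k" and kn: "k \<le> n"
  shows "ereal (real k * log (real k) (real n) / 8) \<le> opt_bandit_obl n k r"
proof -
  obtain d where d: "k ^ d \<le> n" "log (real k) (real n) < real d + 1" "1 \<le> d"
    using exists_power_le_gt_log[OF k kn] by blast
  have "log (real k) (real n) \<le> 2 * real d" using d by linarith
  then have "real k * log (real k) (real n) \<le> (2 * (real k - 1)) * (2 * real d)"
    using k one_le_log[OF k kn] by (intro mult_mono) auto
  then have "real k * log (real k) (real n) / 8 \<le> real d * (real k - 1) / 2"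
    by (simp add: algebra_simps)
  also have "ereal \<dots> \<le> opt_bandit_obl n k r" by (rule opt_bandit_obl_ge_digits[OF k d(1)])
  finally show ?thesis by simp
qed

lemma opt_bandit_adap_lower:
  assumes k: "2 \<le> k" and kn: "k \<le> n"
  shows "ereal (real k * (log (real k) (real n) + real r) / 24) \<le> opt_bandit_adap n k r"
proof -
  let ?a = "real k * log (real k) (real n) / 8" and ?b = "(real k - 1) * (real r + 1) / 6"
  have "real k * real r \<le> 2 * (real k - 1) * real r" using k by (intro mult_right_mono) auto
  then have "real k * (log (real k) (real n) + real r) / 24 \<le> ?a / 3 + ?b / 2"
    using k by (simp add: algebra_simps)
  also have "\<dots> \<le> max ?a ?b"
  proof -
    have "0 \<le> ?a" "0 \<le> ?b" using one_le_log[OF k kn] k by simp_all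
    then show ?thesis using max.cobounded1[of ?a ?b] max.cobounded2[of ?a ?b] by linarith
  qed
  also have "ereal (max ?a ?b) \<le> opt_bandit_adap n k r"
    using order_trans[OF opt_bandit_obl_lower[OF k kn] opt_bandit_obl_le_adap[OF k]]
      opt_bandit_adap_ge_rotating[OF k kn] by (simp add: max_def)
  finally show ?thesis by simp
qed

lemma opt_bandit_adap_bounds:
  assumes k: "2 \<le> k" and kn: "k \<le> n"
  shows "ereal (1/24 * real k * (log (real k) (real n) + real r)) \<le> opt_bandit_adap n k r \<and>
    opt_bandit_adap n k r \<le> ereal (36 * real k * (log (real k) (real n) + real r))"
proof
  show "ereal (1/24 * real k * (log (real k) (real n) + real r)) \<le> opt_bandit_adap n k r"
    using opt_bandit_adap_lower[OF k kn] by simp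
  have "12 * real k * log (real k) (real n) + 36 * real k * real r \<le> 36 * real k * (log (real k) (real n) + real r)"
    using one_le_log[OF k kn] by (simp add: algebra_simps)
  moreover have "opt_bandit_adap n k r \<le> ereal (12 * real k * log (real k) (real n) + 36 * real k * real r)"
    using opt_bandit_adap_upper[OF k] kn k by simp
  ultimately show "opt_bandit_adap n k r \<le> ereal (36 * real k * (log (real k) (real n) + real r))"
    by (simp add: order_trans)
qed

lemma opt_bandit_obl_bounds:
  assumes k: "2 \<le> k" and kn: "k \<le> n" and r: "real r \<le> C0 * log (real k) (real n)"
  shows "ereal (1/8 * real k * log (real k) (real n)) \<le> opt_bandit_obl n k r \<and>
    opt_bandit_obl n k r \<le> ereal ((12 + 36 * C0) * real k * log (real k) (real n))"
proof
  show "ereal (1/8 * real k * log (real k) (real n)) \<le> opt_bandit_obl n k r"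
    using opt_bandit_obl_lower[OF k kn] by simp
  have "real k * real r \<le> real k * (C0 * log (real k) (real n))" using r by (intro mult_left_mono) auto
  then have "12 * real k * log (real k) (real n) + 36 * real k * real r
      \<le> (12 + 36 * C0) * real k * log (real k) (real n)"
    by (simp add: algebra_simps)
  moreover have "opt_bandit_obl n k r \<le> ereal (12 * real k * log (real k) (real n) + 36 * real k * real r)"
    using order_trans[OF opt_bandit_obl_le_adap[OF k] opt_bandit_adap_upper[OF k]] kn k by simp
  ultimately show "opt_bandit_obl n k r \<le> ereal ((12 + 36 * C0) * real k * log (real k) (real n))"
    by (simp add: order_trans)
qed

theorem theorem4p12:
  shows "(\<exists>c C::real. 0 < c \<and> c \<le> C \<and>
            (\<forall>n k r::nat. 2 \<le> k \<and> k \<le> n \<longrightarrow>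
               ereal (c * real k * (log (real k) (real n) + real r)) \<le> opt_bandit_adap n k r \<and>
               opt_bandit_adap n k r \<le> ereal (C * real k * (log (real k) (real n) + real r))))
       \<and> (\<forall>C0::real. C0 > 0 \<longrightarrow>
            (\<exists>c' C'::real. 0 < c' \<and> c' \<le> C' \<and>
               (\<forall>n k r::nat. 2 \<le> k \<and> k \<le> n \<and> real r \<le> C0 * log (real k) (real n) \<longrightarrow>
                  ereal (c' * real k * log (real k) (real n)) \<le> opt_bandit_obl n k r \<and>
                  opt_bandit_obl n k r \<le> ereal (C' * real k * log (real k) (real n)))))"
proof (intro conjI allI impI)
  show "\<exists>c C::real. 0 < c \<and> c \<le> C \<and>
      (\<forall>n k r::nat. 2 \<le> k \<and> k \<le> n \<longrightarrow>
         ereal (c * real k * (log (real k) (real n) + real r)) \<le> opt_bandit_adap n k r \<and>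
         opt_bandit_adap n k r \<le> ereal (C * real k * (log (real k) (real n) + real r)))"
    using opt_bandit_adap_bounds by (intro exI[of _ "1/24"] exI[of _ 36]) auto
next
  fix C0 :: real assume "C0 > 0"
  then show "\<exists>c' C'::real. 0 < c' \<and> c' \<le> C' \<and>
      (\<forall>n k r::nat. 2 \<le> k \<and> k \<le> n \<and> real r \<le> C0 * log (real k) (real n) \<longrightarrow>
         ereal (c' * real k * log (real k) (real n)) \<le> opt_bandit_obl n k r \<and>
         opt_bandit_obl n k r \<le> ereal (C' * real k * log (real k) (real n)))"
    using opt_bandit_obl_bounds[of _ _ _ C0] by (intro exI[of _ "1/8"] exI[of _ "12 + 36 * C0"]) auto
qed

end
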